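(* Let $d\in\mathbb{N}$, let $\lambda_1,\ldots,\lambda_d\ge0$, and let $\{\boldsymbol\eta(i)\}_{i\ge1}$ be an $\mathbb{R}^d$-valued time series. Suppose that, possibly after changing the probability space, for each $n$ there exist independent standard Wiener processes $W_{n,1},\ldots,W_{n,d}$ such that, with $\mathbf W_{\boldsymbol\lambda,n}(t)=(\sqrt{\lambda_1}W_{n,1}(t),\ldots,\sqrt{\lambda_d}W_{n,d}(t))^T$, $$\frac1{\sqrt n}\max_{1\le k\le n}\Big\|\sum_{i=1}^k\boldsymbol\eta(i)-\mathbf W_{\boldsymbol\lambda,n}(k)\Big\|\xrightarrow{a.s.}0.$$ Let $h:[-1,1]\to\mathbb{R}$ be non-constant with $h(x)=0$ for $x\le0$, of bounded total variation, and $\alpha$-Hölder continuous on $[0,1]$ for some $\alpha>0$. Then there exist independent standard Brownian bridges $\{B_{n,j}(t):0\le t\le1\}$, $j=1,\ldots,d$, such that $$\sup_{0<t<1}\Big\|\frac1{\sqrt n}\sum_{i=1}^nh\!\left(\frac{i-\lfloor nt\rfloor}{n}\right)(\boldsymbol\eta(i)-\bar{\boldsymbol\eta}_n)-\mathbf G_{\boldsymbol\lambda,n}(t)\Big\|\xrightarrow{\mathsf P}0.$$ Here $\bar{\boldsymbol\eta}_n=n^{-1}\sum_{i=1}^n\boldsymbol\eta(i)$, $\mathbf G_{\boldsymbol\lambda,n}(t)=(\sqrt{\lambda_1}G_{n,1}(t),\ldots,\sqrt{\lambda_d}G_{n,d}(t))^T$, and $G_{n,p}(t)=\int_0^{1-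t}B_{n,p}(1-t-y)\,dh(y)$.
   Context: $\|\cdot\|$ denotes the Euclidean norm on $\mathbb{R}^d$. The integral defining $G_{n,p}$ is a Riemann–Stieltjes integral with respect to $h$. *)

theory Defs
  imports "HOL-Probability.Probability"
begin

definition bounded_variation_on :: "(real \<Rightarrow> real) \<Rightarrow> real \<Rightarrow> real \<Rightarrow> bool" where
  "bounded_variation_on f a b \<longleftrightarrow>
     (\<exists>V. \<forall>(m::nat) (x::nat \<Rightarrow> real). x 0 = a \<and> x m = b \<and> (\<forall>i<m. x i \<le> x (Suc i)) \<longrightarrow>
        (\<Sum>i<m. \<bar>f (x (Suc i)) - f (x i)\<bar>) \<le> V)"

definition holder_on :: "real \<Rightarrow> real set \<Rightarrow> (real \<Rightarrow> real) \<Rightarrow> bool" where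
  "holder_on \<alpha> S f \<longleftrightarrow> (\<exists>C. \<forall>x\<in>S. \<forall>y\<in>S. \<bar>f x - f y\<bar> \<le> C * \<bar>x - y\<bar> powr \<alpha>)"

definition has_rs_integral :: "(real \<Rightarrow> real) \<Rightarrow> (real \<Rightarrow> real) \<Rightarrow> real \<Rightarrow> real \<Rightarrow> real \<Rightarrow> bool" where
  "has_rs_integral f g a b I \<longleftrightarrow>
     (\<forall>\<epsilon>>0. \<exists>\<delta>>0. \<forall>(m::nat) (x::nat \<Rightarrow> real) (\<xi>::nat \<Rightarrow> real).
        x 0 = a \<and> x m = b \<and> (\<forall>i<m. x i \<le> \<xi> i \<and> \<xi> i \<le> x (Suc i) \<and> x (Suc i) - x i < \<delta>) \<longrightarrow>
        \<bar>(\<Sum>i<m. f (\<xi> i) * (g (x (Suc i)) - g (x i))) - I\<bar> < \<epsilon>)"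

definition rs_integral :: "(real \<Rightarrow> real) \<Rightarrow> (real \<Rightarrow> real) \<Rightarrow> real \<Rightarrow> real \<Rightarrow> real" where
  "rs_integral f g a b = (THE I. has_rs_integral f g a b I)"

definition normal_rv :: "'a measure \<Rightarrow> ('a \<Rightarrow> real) \<Rightarrow> real \<Rightarrow> real \<Rightarrow> bool" where
  "normal_rv M X \<mu> s2 \<longleftrightarrow> X \<in> borel_measurable M \<and>
     (if s2 = 0 then (AE \<omega> in M. X \<omega> = \<mu>)
      else distributed M lborel X (normal_density \<mu> (sqrt s2)))"

definition centered_gaussian_process ::
    "'a measure \<Rightarrow> real set \<Rightarrow> (real \<Rightarrow> 'a \<Rightarrow> real) \<Rightarrow> (real \<Rightarrow> real \<Rightarrow> real) \<Rightarrow> bool" where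
  "centered_gaussian_process M T X K \<longleftrightarrow>
     (\<forall>t\<in>T. X t \<in> borel_measurable M) \<and>
     (\<forall>(m::nat) (ts::nat \<Rightarrow> real) (cs::nat \<Rightarrow> real). (\<forall>i<m. ts i \<in> T) \<longrightarrow>
        normal_rv M (\<lambda>\<omega>. \<Sum>i<m. cs i * X (ts i) \<omega>) 0
          (\<Sum>i<m. \<Sum>j<m. cs i * cs j * K (ts i) (ts j)))"

definition std_wiener_process :: "'a measure \<Rightarrow> (real \<Rightarrow> 'a \<Rightarrow> real) \<Rightarrow> bool" where
  "std_wiener_process M W \<longleftrightarrow>
     centered_gaussian_process M {0..} W (\<lambda>s t. min s t) \<and>
     (AE \<omega> in M. continuous_on {0..} (\<lambda>t. W t \<omega>))"

definition std_brownian_bridge :: "'a measure \<Rightarrow> (real \<Rightarrow> 'a \<Rightarrow> real) \<Rightarrow> bool" where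
  "std_brownian_bridge M B \<longleftrightarrow>
     centered_gaussian_process M {0..1} B (\<lambda>s t. min s t - s * t) \<and>
     (AE \<omega> in M. continuous_on {0..1} (\<lambda>t. B t \<omega>))"

definition indep_processes ::
    "'a measure \<Rightarrow> real set \<Rightarrow> 'j set \<Rightarrow> ('j \<Rightarrow> real \<Rightarrow> 'a \<Rightarrow> real) \<Rightarrow> bool" where
  "indep_processes M T J X \<longleftrightarrow>
     prob_space.indep_vars M (\<lambda>_. Pi\<^sub>M T (\<lambda>_. borel)) (\<lambda>j \<omega>. restrict (\<lambda>t. X j t \<omega>) T) J"

(* Outer probability (so that convergence in probability does not depend on measurability) *)
definition outer_prob :: "'a measure \<Rightarrow> 'a set \<Rightarrow> real" where
  "outer_prob M S = (INF A\<in>{A\<in>sets M. S \<subseteq> A}. measure M A)"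

end

(* Summation by parts writes the kernel statistic at t as a Riemann-Stieltjes sum of the centred
   partial sums against the increments of h(. - k/n), k = floor (n t).  By the strong approximation the
   centred partial sums, divided by sqrt n, are uniformly close to the values at the grid points i/n of
   the Brownian bridge B(s) = ((1 - s) W(n) - W(n (1 - s))) / sqrt n, with an error bounded by the total
   variation of h times max_k |S_k - W(k)| / sqrt n.  After the reflection y = 1 - t - s the remaining
   sum is a Riemann-Stieltjes sum for the integral of B(1 - t - y) dh(y) over [0, 1 - t]; its error is
   the total variation of h times the modulus of continuity of B at scale 2/n.  Dyadic chaining with
   Gaussian fourth-moment bounds makes that modulus uniformly small outside events of small
   probability. *)

theory Submission
  imports Defs
begin

definition next_in :: "real set \<Rightarrow> real \<Rightarrow> real" where
  "next_in X x = Min {y\<in>X. y > x}"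

definition chain_sum :: "(real \<Rightarrow> real \<Rightarrow> real) \<Rightarrow> real set \<Rightarrow> real" where
  "chain_sum g X = (\<Sum>x\<in>{x\<in>X. x < Max X}. g x (next_in X x))"

lemma chain_sum_singleton: "chain_sum g {u} = 0"
  unfolding chain_sum_def by (rule sum.neutral) auto

lemma chain_sum_insert_above:
  assumes X: "finite X" "X \<noteq> {}" and z: "z > Max X"
  shows "chain_sum g (insert z X) = chain_sum g X + g (Max X) z"
proof -
  have le: "x \<le> Max X" if "x \<in> X" for x using X that by simp
  have mx: "Max (insert z X) = z" using X z by (simp add: Max_insert)
  have S: "{x\<in>insert z X. x < z} = X" using le z by force
  have n1: "next_in (insert z X) (Max X) = z"
  proof -
    have "{y\<in>insert z X. y > Max X} = {z}" using le z by force
    thus ?thesis by (simp add: next_in_def)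
  qed
  have n2: "next_in (insert z X) x = next_in X x" if "x \<in> X" "x < Max X" for x
  proof -
    have e: "{y\<in>insert z X. y > x} = insert z {y\<in>X. y > x}" using that z by auto
    have ne: "{y\<in>X. y > x} \<noteq> {}" using that X Max_in by blast
    have fin: "finite {y\<in>X. y > x}" using X by auto
    have "Min {y\<in>X. y > x} \<le> Max X" using Min_in[OF fin ne] le by auto
    then have "min z (Min {y\<in>X. y > x}) = Min {y\<in>X. y > x}" using z by linarith
    then show ?thesis using ne fin unfolding next_in_def e by (simp add: Min_insert)
  qed
  have "chain_sum g (insert z X) = (\<Sum>x\<in>X. g x (next_in (insert z X) x))"
    unfolding chain_sum_def mx S ..
  also have "\<dots> = g (Max X) z + (\<Sum>x\<in>{x\<in>X. x < Max X}. g x (next_in (insert z X) x))"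
  proof -
    have "X - {Max X} = {x\<in>X. x < Max X}" using le by force
    then show ?thesis using sum.remove[OF X(1) Max_in[OF X], of "\<lambda>x. g x (next_in (insert z X) x)"] n1 by simp
  qed
  also have "\<dots> = g (Max X) z + chain_sum g X"
    unfolding chain_sum_def by (simp add: n2)
  finally show ?thesis by simp
qed

lemma chain_sum_insert_between:
  assumes X: "finite X" and zX: "z \<notin> X" and a: "a \<in> X" "a < z" and b: "b \<in> X" "b > z"
  shows "chain_sum g (insert z X) = chain_sum g X - g (Max {x\<in>X. x < z}) (Min {x\<in>X. x > z})
     + g (Max {x\<in>X. x < z}) z + g z (Min {x\<in>X. x > z})"
proof -
  define p where "p = Max {x\<in>X. x < z}"
  define n where "n = Min {x\<in>X. x > z}"
  have fA: "finite {x\<in>X. x < z}" "{x\<in>X. x < z} \<noteq> {}" using X a by auto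
  have fB: "finite {x\<in>X. x > z}" "{x\<in>X. x > z} \<noteq> {}" using X b by auto
  have pX: "p \<in> X" "p < z" using Max_in[OF fA] unfolding p_def by auto
  have pge: "x \<le> p" if "x \<in> X" "x < z" for x using Max_ge[OF fA(1)] that unfolding p_def by auto
  have le: "x \<le> Max X" if "x \<in> X" for x using X that by simp
  have zlt: "z < Max X" using b le by fastforce
  have mx: "Max (insert z X) = Max X" using X b zlt by (subst Max_insert) auto
  define S where "S = {x\<in>X. x < Max X}"
  have S': "{x\<in>insert z X. x < Max (insert z X)} = insert z S" unfolding mx S_def using zlt by auto
  have zS: "z \<notin> S" using zX S_def by auto
  have fS: "finite S" using X S_def by auto
  have pS: "p \<in> S" using pX zlt S_def by auto
  have gt_p: "{y\<in>X. y > p} = {y\<in>X. y > z}"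
    using pge pX zX by (force simp: not_less_iff_gr_or_eq)
  have n_z: "next_in (insert z X) z = n"
  proof -
    have "{y\<in>insert z X. y > z} = {y\<in>X. y > z}" by auto
    thus ?thesis by (simp add: next_in_def n_def)
  qed
  have n_p: "next_in (insert z X) p = z"
  proof -
    have "{y\<in>insert z X. y > p} = insert z {y\<in>X. y > z}" using gt_p pX by auto
    moreover have "z \<le> Min {y\<in>X. y > z}" using fB by (simp add: less_imp_le)
    ultimately show ?thesis using fB by (simp add: next_in_def min_def)
  qed
  have n_p2: "next_in X p = n" unfolding next_in_def gt_p n_def ..
  have n_o: "next_in (insert z X) x = next_in X x" if "x \<in> S" "x \<noteq> p" for x
  proof (cases "x > z")
    case True
    then have "{y\<in>insert z X. y > x} = {y\<in>X. y > x}" by auto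
    thus ?thesis by (simp add: next_in_def)
  next
    case False
    then have "x < p" using that pge[of x] zX S_def by force
    have e: "{y\<in>insert z X. y > x} = insert z {y\<in>X. y > x}" using \<open>x < p\<close> pX by auto
    have ne: "{y\<in>X. y > x} \<noteq> {}" "finite {y\<in>X. y > x}" using pX \<open>x<p\<close> X by auto
    have "Min {y\<in>X. y > x} \<le> p" using ne pX \<open>x<p\<close> by (intro Min_le) auto
    then have "min z (Min {y\<in>X. y > x}) = Min {y\<in>X. y > x}" using pX by linarith
    then show ?thesis using ne unfolding next_in_def e by (simp add: Min_insert)
  qed
  have "chain_sum g (insert z X) = g z n + (\<Sum>x\<in>S. g x (next_in (insert z X) x))"
    unfolding chain_sum_def S' using fS zS n_z by simp
  also have "(\<Sum>x\<in>S. g x (next_in (insert z X) x)) = g p z + (\<Sum>x\<in>S-{p}. g x (next_in X x))"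
    using fS pS n_p n_o by (simp add: sum.remove)
  also have "chain_sum g X = g p n + (\<Sum>x\<in>S-{p}. g x (next_in X x))"
    unfolding chain_sum_def S_def[symmetric] using fS pS n_p2 by (simp add: sum.remove)
  ultimately show ?thesis unfolding p_def[symmetric] n_def[symmetric] by simp
qed

lemma stepwise_mono_le:
  assumes "\<forall>i<m. x i \<le> x (Suc i)" "i \<le> j" "j \<le> m"
  shows "x i \<le> (x j :: real)"
  using assms(2,3)
proof (induction j)
  case (Suc j)
  then show ?case
    using assms(1) by (cases "i = Suc j") (auto intro: order.trans[of _ "x j"])
qed simp

lemma sum_steps_eq_chain_sum:
  assumes mono: "\<forall>i<m. x i \<le> x (Suc i)" and g0: "\<And>u. g u u = 0"
  shows "(\<Sum>i<m. g (x i) (x (Suc i))) = chain_sum g (x ` {..m})"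
  using mono
proof (induction m)
  case (Suc m)
  have IH: "(\<Sum>i<m. g (x i) (x (Suc i))) = chain_sum g (x ` {..m})" using Suc by simp
  have im: "x ` {..Suc m} = insert (x (Suc m)) (x ` {..m})" by (simp add: atMost_Suc)
  have mx: "Max (x ` {..m}) = x m"
    by (rule Max_eqI) (use stepwise_mono_le[of m x] Suc.prems in auto)
  show ?case
  proof (cases "x (Suc m) = x m")
    case True
    then show ?thesis using IH im g0 by (simp add: insert_absorb)
  next
    case False
    then have "x (Suc m) > Max (x ` {..m})" using Suc.prems[rule_format, of m] mx by auto
    then have "chain_sum g (x ` {..Suc m}) = chain_sum g (x ` {..m}) + g (x m) (x (Suc m))"
      unfolding im by (subst chain_sum_insert_above) (auto simp: mx)
    then show ?thesis using IH by simp
  qed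
qed (simp add: chain_sum_singleton)

lemma finite_set_monotone_enumeration:
  fixes Z :: "real set"
  assumes "finite Z" "Z \<noteq> {}"
  obtains m x where "\<forall>i<m. x i \<le> x (Suc i)" "x ` {..m} = Z"
proof -
  define xs where "xs = sorted_list_of_set Z"
  have s: "sorted xs" "set xs = Z" "length xs > 0" using assms unfolding xs_def
    by (auto simp: sorted_list_of_set.length_sorted_key_list_of_set card_gt_0_iff)
  define m where "m = length xs - 1"
  have "\<forall>i<m. xs ! i \<le> xs ! (Suc i)" using s(1) unfolding m_def by (auto intro: sorted_nth_mono)
  moreover have "(\<lambda>i. xs ! i) ` {..m} = Z"
  proof -
    have "{..m} = {..<length xs}" using s(3) unfolding m_def by (auto simp: less_Suc_eq_le[symmetric])
    then show ?thesis using s(2) by (auto simp: set_conv_nth)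
  qed
  ultimately show ?thesis using that by blast
qed

lemma chain_sum_refine:
  fixes X D :: "real set" and f h :: "real \<Rightarrow> real"
  assumes X: "finite X" "X \<noteq> {}" and D: "finite D" "D \<inter> X = {}" "\<forall>z\<in>D. Min X < z \<and> z < Max X"
  shows "chain_sum (\<lambda>u v. f u * (h v - h u)) (X \<union> D) - chain_sum (\<lambda>u v. f u * (h v - h u)) X
       = chain_sum (\<lambda>u v. (f u - f (Max {x\<in>X. x \<le> u})) * (h v - h u)) (X \<union> D)"
  using D
proof (induction D rule: finite_induct)
  case empty
  have "Max {y\<in>X. y \<le> x} = x" if "x \<in> X" for x
    by (rule Max_eqI) (use X that in auto)
  then have "chain_sum (\<lambda>u v. (f u - f (Max {x\<in>X. x \<le> u})) * (h v - h u)) X = 0"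
    unfolding chain_sum_def by (intro sum.neutral) auto
  then show ?case by simp
next
  case (insert z D)
  define Y where "Y = X \<union> D"
  have Y: "finite Y" "z \<notin> Y" using insert X unfolding Y_def by auto
  have mi: "Min X \<in> Y" "Min X < z" using insert X Min_in unfolding Y_def by auto
  have ma: "Max X \<in> Y" "Max X > z" using insert X Max_in unfolding Y_def by auto
  define p where "p = Max {y\<in>Y. y < z}"
  have fA: "finite {y\<in>Y. y < z}" "{y\<in>Y. y < z} \<noteq> {}" using Y mi by auto
  have pge: "x \<le> p" if "x \<in> Y" "x < z" for x using Max_ge[OF fA(1)] that unfolding p_def by auto
  have pz: "p < z" using Max_in[OF fA] unfolding p_def by auto
  have "{x\<in>X. x \<le> z} = {x\<in>X. x \<le> p}"
    using insert.prems X pge pz unfolding Y_def by (force simp: order.order_iff_strict)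
  then have pi: "Max {x\<in>X. x \<le> z} = Max {x\<in>X. x \<le> p}" by simp
  have e: "X \<union> insert z D = insert z Y" unfolding Y_def by auto
  have IH: "chain_sum (\<lambda>u v. f u * (h v - h u)) Y - chain_sum (\<lambda>u v. f u * (h v - h u)) X
       = chain_sum (\<lambda>u v. (f u - f (Max {x\<in>X. x \<le> u})) * (h v - h u)) Y"
    using insert unfolding Y_def by auto
  note m1 = chain_sum_insert_between[OF Y mi ma, of "\<lambda>u v. f u * (h v - h u)", folded p_def]
  note m2 = chain_sum_insert_between[OF Y mi ma,
      of "\<lambda>u v. (f u - f (Max {x\<in>X. x \<le> u})) * (h v - h u)", folded p_def]
  show ?case unfolding e m1 m2 using IH pi by (simp add: algebra_simps)
qed

lemma abs_chain_sum_le: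
  assumes "finite Y" "\<And>u. u \<in> Y \<Longrightarrow> u < Max Y \<Longrightarrow> \<bar>g u (next_in Y u)\<bar> \<le> c * g' u (next_in Y u)"
  shows "\<bar>chain_sum g Y\<bar> \<le> c * chain_sum g' Y"
proof -
  have "\<bar>chain_sum g Y\<bar> \<le> (\<Sum>x\<in>{x\<in>Y. x < Max Y}. \<bar>g x (next_in Y x)\<bar>)"
    unfolding chain_sum_def by (rule sum_abs)
  also have "\<dots> \<le> (\<Sum>x\<in>{x\<in>Y. x < Max Y}. c * g' x (next_in Y x))"
    by (rule sum_mono) (use assms in auto)
  also have "\<dots> = c * chain_sum g' Y" unfolding chain_sum_def by (simp add: sum_distrib_left)
  finally show ?thesis .
qed

section \<open>Riemann--Stieltjes integrals against functions of bounded variation\<close>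

definition is_partition :: "real \<Rightarrow> real \<Rightarrow> nat \<Rightarrow> (nat \<Rightarrow> real) \<Rightarrow> bool" where
  "is_partition a b m x \<longleftrightarrow> x 0 = a \<and> x m = b \<and> (\<forall>i<m. x i \<le> x (Suc i))"

definition variation_le :: "(real \<Rightarrow> real) \<Rightarrow> real \<Rightarrow> real \<Rightarrow> real \<Rightarrow> bool" where
  "variation_le h a b V \<longleftrightarrow> (\<forall>m x. (\<forall>i<m. x i \<le> x (Suc i)) \<and> (\<forall>i\<le>m. x i \<in> {a..b}) \<longrightarrow>
      (\<Sum>i<m. \<bar>h (x (Suc i)) - h (x i)\<bar>) \<le> V)"

definition modulus_le :: "(real \<Rightarrow> real) \<Rightarrow> real set \<Rightarrow> real \<Rightarrow> real \<Rightarrow> bool" where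
  "modulus_le f S \<delta> \<epsilon> \<longleftrightarrow> (\<forall>u\<in>S. \<forall>v\<in>S. \<bar>u - v\<bar> \<le> \<delta> \<longrightarrow> \<bar>f u - f v\<bar> \<le> \<epsilon>)"

definition rs_sum :: "(real \<Rightarrow> real) \<Rightarrow> (real \<Rightarrow> real) \<Rightarrow> nat \<Rightarrow> (nat \<Rightarrow> real) \<Rightarrow> (nat \<Rightarrow> real) \<Rightarrow> real"
  where "rs_sum f g m x \<xi> = (\<Sum>i<m. f (\<xi> i) * (g (x (Suc i)) - g (x i)))"

definition uniform_grid :: "real \<Rightarrow> real \<Rightarrow> nat \<Rightarrow> nat \<Rightarrow> real" where
  "uniform_grid a b N i = a + (b - a) * real i / real N"

definition grid_rs_sum :: "(real \<Rightarrow> real) \<Rightarrow> (real \<Rightarrow> real) \<Rightarrow> real \<Rightarrow> real \<Rightarrow> nat \<Rightarrow> real" where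
  "grid_rs_sum f g a b N = rs_sum f g (Suc N) (uniform_grid a b (Suc N)) (uniform_grid a b (Suc N))"

lemma is_partition_range: "is_partition a b m x \<Longrightarrow> i \<le> m \<Longrightarrow> x i \<in> {a..b}"
  unfolding is_partition_def using stepwise_mono_le[of m x 0 i] stepwise_mono_le[of m x i m] by auto

lemma modulus_le_nonneg: "modulus_le f S \<delta> \<epsilon> \<Longrightarrow> \<delta> \<ge> 0 \<Longrightarrow> u \<in> S \<Longrightarrow> \<epsilon> \<ge> 0"
  unfolding modulus_le_def by fastforce

lemma modulus_le_mono: "modulus_le f S \<delta> \<epsilon> \<Longrightarrow> \<delta>' \<le> \<delta> \<Longrightarrow> modulus_le f S \<delta>' \<epsilon>"
  unfolding modulus_le_def by force

lemma continuous_on_imp_modulus_le: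
  assumes "compact S" "continuous_on S f" "\<epsilon> > 0"
  obtains \<delta> where "\<delta> > 0" "modulus_le f S \<delta> \<epsilon>"
proof -
  have "uniformly_continuous_on S f" by (rule compact_uniformly_continuous[OF assms(2,1)])
  then obtain d where d: "d > 0" "\<forall>u\<in>S. \<forall>v\<in>S. dist v u < d \<longrightarrow> dist (f v) (f u) < \<epsilon>"
    using assms(3) unfolding uniformly_continuous_on_def by blast
  have "modulus_le f S (d/2) \<epsilon>"
    unfolding modulus_le_def using d by (force simp: dist_real_def)
  then show ?thesis using d that[of "d/2"] by simp
qed

lemma bounded_variation_on_imp_variation_le:
  assumes "bounded_variation_on h a b" "a \<le> b"
  obtains V where "V \<ge> 0" "variation_le h a b V"
proof -
  obtain V where V: "\<And>m x. x 0 = a \<Longrightarrow> x m = b \<Longrightarrow> (\<forall>i<m. x i \<le> x (Suc i)) \<Longrightarrow>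
        (\<Sum>i<m. \<bar>h (x (Suc i)) - h (x i)\<bar>) \<le> V"
    using assms(1) unfolding bounded_variation_on_def by blast
  have "0 \<le> V"
    using V[of "\<lambda>i. if i = 0 then a else b" 1] assms(2) by simp
  moreover have "variation_le h a b V" unfolding variation_le_def
  proof (intro allI impI)
    fix m and x :: "nat \<Rightarrow> real" assume x: "(\<forall>i<m. x i \<le> x (Suc i)) \<and> (\<forall>i\<le>m. x i \<in> {a..b})"
    define y :: "nat \<Rightarrow> real" where "y i = (if i = 0 then a else if i \<le> Suc m then x (i - 1) else b)" for i
    have ymono: "\<forall>i<Suc (Suc m). y i \<le> y (Suc i)"
    proof (intro allI impI)
      fix i assume i: "i < Suc (Suc m)"
      consider "i = 0" | "i = Suc m" | j where "i = Suc j" "j < m" using i less_Suc_eq not0_implies_Suc by force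
      then show "y i \<le> y (Suc i)" by cases (use x in \<open>auto simp: y_def\<close>)
    qed
    have "(\<Sum>i<m. \<bar>h (x (Suc i)) - h (x i)\<bar>) = (\<Sum>i<m. \<bar>h (y (Suc (Suc i))) - h (y (Suc i))\<bar>)"
      by (rule sum.cong) (auto simp: y_def)
    also have "\<dots> \<le> \<bar>h (y 1) - h (y 0)\<bar> + (\<Sum>i<m. \<bar>h (y (Suc (Suc i))) - h (y (Suc i))\<bar>)
        + \<bar>h (y (Suc (Suc m))) - h (y (Suc m))\<bar>" by simp
    also have "\<dots> = (\<Sum>i<Suc (Suc m). \<bar>h (y (Suc i)) - h (y i)\<bar>)"
      unfolding sum.lessThan_Suc[where n="Suc m"] sum.lessThan_Suc_shift[where n=m] by simp
    also have "\<dots> \<le> V" by (rule V) (use ymono in \<open>auto simp: y_def\<close>)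
    finally show "(\<Sum>i<m. \<bar>h (x (Suc i)) - h (x i)\<bar>) \<le> V" .
  qed
  ultimately show ?thesis using that by blast
qed

lemma variation_le_subinterval:
  "variation_le h a b V \<Longrightarrow> a \<le> c \<Longrightarrow> d \<le> b \<Longrightarrow> variation_le h c d V"
  unfolding variation_le_def by (meson atLeastAtMost_iff order.trans)

lemma variation_le_two_points:
  assumes "variation_le h a b V" "a \<le> u" "u \<le> v" "v \<le> b"
  shows "\<bar>h v - h u\<bar> \<le> V"
  using assms unfolding variation_le_def
  by (elim allE[of _ 1] allE[of _ "\<lambda>i. if i = 0 then u else v"]) auto

lemma variation_le_partition:
  "variation_le h a b V \<Longrightarrow> is_partition a b m x \<Longrightarrow> (\<Sum>i<m. \<bar>h (x (Suc i)) - h (x i)\<bar>) \<le> V"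
  unfolding variation_le_def using is_partition_range[of a b m x] by (auto simp: is_partition_def)

lemma chain_sum_variation_le:
  assumes "variation_le h a b V" "finite Y" "Y \<noteq> {}" "Y \<subseteq> {a..b}"
  shows "chain_sum (\<lambda>u v. \<bar>h v - h u\<bar>) Y \<le> V"
proof -
  obtain m x where x: "\<forall>i<m. x i \<le> x (Suc i)" "x ` {..m} = Y"
    using finite_set_monotone_enumeration[OF assms(2,3)] by blast
  have "chain_sum (\<lambda>u v. \<bar>h v - h u\<bar>) Y = (\<Sum>i<m. \<bar>h (x (Suc i)) - h (x i)\<bar>)"
    using sum_steps_eq_chain_sum[OF x(1), of "\<lambda>u v. \<bar>h v - h u\<bar>"] x(2) by simp
  also have "\<dots> \<le> V" using assms(1,4) x unfolding variation_le_def by blast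
  finally show ?thesis .
qed

lemma partition_point_below:
  assumes P: "is_partition a b m x" and mesh: "\<forall>i<m. x (Suc i) - x i \<le> \<delta>" and u: "a \<le> u" "u < b"
  shows "Max {y\<in>x ` {..m}. y \<le> u} \<in> x ` {..m}" "Max {y\<in>x ` {..m}. y \<le> u} \<le> u"
        "u - Max {y\<in>x ` {..m}. y \<le> u} \<le> \<delta>"
proof -
  define I where "I = {i. i \<le> m \<and> x i \<le> u}"
  have fI: "finite I" "0 \<in> I" using P u unfolding I_def is_partition_def by auto
  define i0 where "i0 = Max I"
  have "i0 \<in> I" using Max_in[OF fI(1)] fI(2) unfolding i0_def by auto
  hence i0: "i0 \<le> m" "x i0 \<le> u" unfolding I_def by auto
  have i0m: "i0 < m" using i0 P u unfolding is_partition_def by (metis le_neq_implies_less not_le)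
  have nx: "x (Suc i0) > u"
  proof (rule ccontr)
    assume "\<not> x (Suc i0) > u"
    then have "Suc i0 \<in> I" using i0m unfolding I_def by auto
    then show False using Max_ge[OF fI(1)] unfolding i0_def by fastforce
  qed
  define Pp where "Pp = {y\<in>x ` {..m}. y \<le> u}"
  have fP: "finite Pp" "x i0 \<in> Pp" using i0 unfolding Pp_def by auto
  have "Max Pp \<in> Pp" using fP by (intro Max_in) auto
  then show "Max {y\<in>x ` {..m}. y \<le> u} \<in> x ` {..m}" "Max {y\<in>x ` {..m}. y \<le> u} \<le> u"
    unfolding Pp_def by auto
  have "Max Pp \<ge> x i0" using Max_ge[OF fP] .
  moreover have "x (Suc i0) - x i0 \<le> \<delta>" using mesh i0m by auto
  ultimately show "u - Max {y\<in>x ` {..m}. y \<le> u} \<le> \<delta>" using nx unfolding Pp_def by linarith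
qed

lemma chain_sum_refinement_close:
  assumes P: "is_partition a b m x" and ab: "a < b"
    and mesh: "\<forall>i<m. x (Suc i) - x i \<le> \<delta>" and mc: "modulus_le f {a..b} \<delta> \<epsilon>" and V: "variation_le h a b V"
    and d0: "\<delta> \<ge> 0" and Y: "finite Y" "x ` {..m} \<subseteq> Y" "Y \<subseteq> {a..b}"
  shows "\<bar>chain_sum (\<lambda>u v. f u * (h v - h u)) Y - rs_sum f h m x x\<bar> \<le> \<epsilon> * V"
proof -
  define X where "X = x ` {..m}"
  have mono: "\<forall>i<m. x i \<le> x (Suc i)" using P unfolding is_partition_def by auto
  have L: "rs_sum f h m x x = chain_sum (\<lambda>u v. f u * (h v - h u)) X"
    unfolding rs_sum_def X_def by (rule sum_steps_eq_chain_sum[OF mono]) simp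
  have fX: "finite X" "X \<noteq> {}" unfolding X_def by auto
  have Xr: "X \<subseteq> {a..b}" unfolding X_def using is_partition_range[OF P] by auto
  have aX: "a \<in> X" "b \<in> X" using P unfolding X_def is_partition_def by force+
  have minX: "Min X = a" by (rule Min_eqI) (use fX Xr aX in auto)
  have maxX: "Max X = b" by (rule Max_eqI) (use fX Xr aX in auto)
  have maxY: "Max Y = b" by (rule Max_eqI) (use Y aX X_def in auto)
  define D where "D = Y - X"
  have D: "finite D" "D \<inter> X = {}" "\<forall>z\<in>D. Min X < z \<and> z < Max X"
  proof -
    show "finite D" "D \<inter> X = {}" using Y unfolding D_def by auto
    show "\<forall>z\<in>D. Min X < z \<and> z < Max X"
    proof
      fix z assume "z \<in> D"
      then have "z \<in> {a..b}" "z \<noteq> a" "z \<noteq> b" using Y aX unfolding D_def by auto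
      then show "Min X < z \<and> z < Max X" unfolding minX maxX by auto
    qed
  qed
  have YXD: "X \<union> D = Y" using Y unfolding D_def X_def by auto
  have e0: "\<epsilon> \<ge> 0" using modulus_le_nonneg[OF mc d0, of a] ab by simp
  have "\<bar>chain_sum (\<lambda>u v. (f u - f (Max {x\<in>X. x \<le> u})) * (h v - h u)) Y\<bar>
      \<le> \<epsilon> * chain_sum (\<lambda>u v. \<bar>h v - h u\<bar>) Y"
  proof (rule abs_chain_sum_le[OF Y(1)])
    fix u assume u: "u \<in> Y" "u < Max Y"
    have ur: "a \<le> u" "u < b" using u Y maxY by auto
    note pc = partition_point_below[OF P mesh ur, folded X_def]
    have "u \<in> {a..b}" "Max {x\<in>X. x \<le> u} \<in> {a..b}" "\<bar>u - Max {x\<in>X. x \<le> u}\<bar> \<le> \<delta>"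
      using pc Xr ur by auto
    then have "\<bar>f u - f (Max {x\<in>X. x \<le> u})\<bar> \<le> \<epsilon>"
      using mc unfolding modulus_le_def by blast
    then show "\<bar>(f u - f (Max {x\<in>X. x \<le> u})) * (h (next_in Y u) - h u)\<bar> \<le> \<epsilon> * \<bar>h (next_in Y u) - h u\<bar>"
      by (simp add: abs_mult mult_right_mono)
  qed
  also have "\<dots> \<le> \<epsilon> * V"
    using chain_sum_variation_le[OF V Y(1) _ Y(3)] aX Y(2) X_def e0 by (auto intro: mult_left_mono)
  finally show ?thesis
    using chain_sum_refine[OF fX D, of f h] unfolding YXD L by simp
qed

lemma rs_sums_close:
  assumes P: "is_partition a b m x" "is_partition a b m' x'" and ab: "a < b"
    and mesh: "\<forall>i<m. x (Suc i) - x i \<le> \<delta>" "\<forall>i<m'. x' (Suc i) - x' i \<le> \<delta>"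
    and mc: "modulus_le f {a..b} \<delta> \<epsilon>" and V: "variation_le h a b V" and d0: "\<delta> \<ge> 0"
  shows "\<bar>rs_sum f h m x x - rs_sum f h m' x' x'\<bar> \<le> 2 * \<epsilon> * V"
proof -
  define Y where "Y = x ` {..m} \<union> x' ` {..m'}"
  have Y: "finite Y" "Y \<subseteq> {a..b}"
    unfolding Y_def using is_partition_range[OF P(1)] is_partition_range[OF P(2)] by auto
  have "\<bar>chain_sum (\<lambda>u v. f u * (h v - h u)) Y - rs_sum f h m x x\<bar> \<le> \<epsilon> * V"
    by (rule chain_sum_refinement_close[OF P(1) ab mesh(1) mc V d0 Y(1) _ Y(2)]) (auto simp: Y_def)
  moreover have "\<bar>chain_sum (\<lambda>u v. f u * (h v - h u)) Y - rs_sum f h m' x' x'\<bar> \<le> \<epsilon> * V"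
    by (rule chain_sum_refinement_close[OF P(2) ab mesh(2) mc V d0 Y(1) _ Y(2)]) (auto simp: Y_def)
  ultimately show ?thesis by linarith
qed

lemma rs_sum_tags_close:
  assumes P: "is_partition a b m x"
    and mesh: "\<forall>i<m. x (Suc i) - x i \<le> \<delta>" and tag: "\<forall>i<m. x i \<le> \<xi> i \<and> \<xi> i \<le> x (Suc i)"
    and mc: "modulus_le f {a..b} \<delta> \<epsilon>" and V: "variation_le h a b V" and d0: "\<delta> \<ge> 0"
  shows "\<bar>rs_sum f h m x \<xi> - rs_sum f h m x x\<bar> \<le> \<epsilon> * V"
proof -
  have e0: "\<epsilon> \<ge> 0" using modulus_le_nonneg[OF mc d0, of a] is_partition_range[OF P, of 0] P
    by (simp add: is_partition_def)
  have "\<bar>rs_sum f h m x \<xi> - rs_sum f h m x x\<bar> = \<bar>\<Sum>i<m. (f (\<xi> i) - f (x i)) * (h (x (Suc i)) - h (x i))\<bar>"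
    by (simp only: rs_sum_def sum_subtractf[symmetric] left_diff_distrib)
  also have "\<dots> \<le> (\<Sum>i<m. \<epsilon> * \<bar>h (x (Suc i)) - h (x i)\<bar>)"
  proof (rule order.trans[OF sum_abs sum_mono])
    fix i assume i: "i \<in> {..<m}"
    have "x i \<in> {a..b}" "x (Suc i) \<in> {a..b}" using is_partition_range[OF P] i by auto
    moreover have "x i \<le> \<xi> i" "\<xi> i \<le> x (Suc i)" "x (Suc i) - x i \<le> \<delta>" using tag mesh i by auto
    ultimately have "\<xi> i \<in> {a..b}" "x i \<in> {a..b}" "\<bar>\<xi> i - x i\<bar> \<le> \<delta>" by auto
    then show "\<bar>(f (\<xi> i) - f (x i)) * (h (x (Suc i)) - h (x i))\<bar> \<le> \<epsilon> * \<bar>h (x (Suc i)) - h (x i)\<bar>"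
      using mc unfolding modulus_le_def by (simp add: abs_mult mult_right_mono)
  qed
  also have "\<dots> \<le> \<epsilon> * V"
    using variation_le_partition[OF V P] e0 by (simp add: sum_distrib_left[symmetric] mult_left_mono)
  finally show ?thesis .
qed

lemma uniform_grid_partition: "a \<le> b \<Longrightarrow> N > 0 \<Longrightarrow> is_partition a b N (uniform_grid a b N)"
  unfolding is_partition_def uniform_grid_def by (auto simp: divide_right_mono mult_left_mono)

lemma uniform_grid_step: "uniform_grid a b N (Suc i) - uniform_grid a b N i = (b - a) / real N"
  unfolding uniform_grid_def by (simp add: diff_divide_distrib[symmetric] algebra_simps)

lemma eventually_uniform_grid_mesh_less:
  assumes "\<delta> > 0"
  shows "\<forall>\<^sub>F N in sequentially. \<forall>i<Suc N. uniform_grid a b (Suc N) (Suc i) - uniform_grid a b (Suc N) i < \<delta>"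
proof -
  have "(\<lambda>N. (b - a) / real (Suc N)) \<longlonglongrightarrow> 0"
    using LIMSEQ_Suc[OF lim_const_over_n[of "b - a"]] by simp
  then have "\<forall>\<^sub>F N in sequentially. (b - a) / real (Suc N) < \<delta>"
    using assms by (rule order_tendstoD(2))
  then show ?thesis by eventually_elim (simp add: uniform_grid_step)
qed

lemma has_rs_integral_imp_grid_rs_sum_tendsto:
  assumes "a < b" "has_rs_integral f h a b J"
  shows "grid_rs_sum f h a b \<longlonglongrightarrow> J"
proof (rule LIMSEQ_I)
  fix e :: real assume "e > 0"
  then obtain \<delta> where "\<delta> > 0" and D: "\<And>m x \<xi>. x 0 = a \<and> x m = b \<and>
      (\<forall>i<m. x i \<le> \<xi> i \<and> \<xi> i \<le> x (Suc i) \<and> x (Suc i) - x i < \<delta>) \<Longrightarrow>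
        \<bar>(\<Sum>i<m. f (\<xi> i) * (h (x (Suc i)) - h (x i))) - J\<bar> < e"
    using assms(2) unfolding has_rs_integral_def by meson
  from eventually_uniform_grid_mesh_less[OF this(1), of a b]
  have "\<forall>\<^sub>F N in sequentially. \<bar>grid_rs_sum f h a b N - J\<bar> < e"
  proof eventually_elim
    case (elim N)
    then show ?case
      using D[of "uniform_grid a b (Suc N)" "Suc N"] uniform_grid_partition[of a b "Suc N"] assms(1)
      unfolding grid_rs_sum_def rs_sum_def is_partition_def by auto
  qed
  then show "\<exists>N0. \<forall>N\<ge>N0. norm (grid_rs_sum f h a b N - J) < e"
    by (simp add: eventually_sequentially)
qed

lemma grid_rs_sum_convergent:
  assumes ab: "a < b" and fc: "continuous_on {a..b} f" and V: "variation_le h a b V" "V \<ge> 0"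
  shows "convergent (grid_rs_sum f h a b)"
proof (rule Cauchy_convergent, rule CauchyI)
  fix e :: real assume e: "e > 0"
  define e' where "e' = e / (2 * V + 2)"
  have e': "e' > 0" "2 * e' * V < e" using e V unfolding e'_def by (auto simp: field_simps)
  obtain \<delta> where d: "\<delta> > 0" "modulus_le f {a..b} \<delta> e'"
    using continuous_on_imp_modulus_le[OF compact_Icc fc e'(1)] by blast
  obtain N0 where N0: "\<And>N i. N \<ge> N0 \<Longrightarrow> i < Suc N \<Longrightarrow>
      uniform_grid a b (Suc N) (Suc i) - uniform_grid a b (Suc N) i \<le> \<delta>"
    using eventually_uniform_grid_mesh_less[OF d(1), of a b] unfolding eventually_sequentially
    by (meson less_imp_le)
  have "\<bar>grid_rs_sum f h a b N - grid_rs_sum f h a b M\<bar> \<le> 2 * e' * V" if "N \<ge> N0" "M \<ge> N0" for N M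
    unfolding grid_rs_sum_def
    by (rule rs_sums_close[OF uniform_grid_partition uniform_grid_partition ab _ _ d(2) V(1)])
       (use ab d N0 that in auto)
  then show "\<exists>M. \<forall>m\<ge>M. \<forall>n\<ge>M. norm (grid_rs_sum f h a b m - grid_rs_sum f h a b n) < e"
    using e' by (intro exI[of _ N0]) (auto intro: le_less_trans)
qed

lemma rs_sum_close_to_grid_limit:
  assumes ab: "a < b" and V: "variation_le h a b V" and lim: "grid_rs_sum f h a b \<longlonglongrightarrow> I"
    and d: "\<delta> > 0" and mc: "modulus_le f {a..b} \<delta> \<epsilon>"
    and P: "is_partition a b m x" and mesh: "\<forall>i<m. x (Suc i) - x i \<le> \<delta>"
    and tag: "\<forall>i<m. x i \<le> \<xi> i \<and> \<xi> i \<le> x (Suc i)"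
  shows "\<bar>rs_sum f h m x \<xi> - I\<bar> \<le> 3 * \<epsilon> * V"
proof (rule tendsto_upperbound)
  show "(\<lambda>N. \<bar>rs_sum f h m x \<xi> - grid_rs_sum f h a b N\<bar>) \<longlonglongrightarrow> \<bar>rs_sum f h m x \<xi> - I\<bar>"
    by (intro tendsto_intros lim)
  have tags: "\<bar>rs_sum f h m x \<xi> - rs_sum f h m x x\<bar> \<le> \<epsilon> * V"
    by (rule rs_sum_tags_close[OF P mesh tag mc V]) (use d in auto)
  from eventually_uniform_grid_mesh_less[OF d, of a b]
  show "\<forall>\<^sub>F N in sequentially. \<bar>rs_sum f h m x \<xi> - grid_rs_sum f h a b N\<bar> \<le> 3 * \<epsilon> * V"
  proof eventually_elim
    case (elim N)
    have "\<bar>rs_sum f h m x x - grid_rs_sum f h a b N\<bar> \<le> 2 * \<epsilon> * V"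
      unfolding grid_rs_sum_def
      by (rule rs_sums_close[OF P uniform_grid_partition ab mesh _ mc V]) (use ab d elim in auto)
    then show ?case using tags by linarith
  qed
qed simp

lemma has_rs_integral_continuous:
  assumes ab: "a < b" and fc: "continuous_on {a..b} f" and V: "variation_le h a b V" "V \<ge> 0"
  shows "has_rs_integral f h a b (rs_integral f h a b)"
proof -
  obtain I where lim: "grid_rs_sum f h a b \<longlonglongrightarrow> I"
    using grid_rs_sum_convergent[OF assms] by (auto simp: convergent_def)
  have "has_rs_integral f h a b I" unfolding has_rs_integral_def
  proof (intro allI impI)
    fix e :: real assume e: "e > 0"
    define e' where "e' = e / (3 * V + 3)"
    have e': "e' > 0" "3 * e' * V < e" using e V unfolding e'_def by (auto simp: field_simps)
    obtain \<delta> where d: "\<delta> > 0" "modulus_le f {a..b} \<delta> e'"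
      using continuous_on_imp_modulus_le[OF compact_Icc fc e'(1)] by blast
    have "\<bar>rs_sum f h m x \<xi> - I\<bar> < e"
      if "x 0 = a \<and> x m = b \<and> (\<forall>i<m. x i \<le> \<xi> i \<and> \<xi> i \<le> x (Suc i) \<and> x (Suc i) - x i < \<delta>)" for m x \<xi>
      using rs_sum_close_to_grid_limit[OF ab V(1) lim d, of m x \<xi>] that e'
      by (force simp: is_partition_def)
    then show "\<exists>\<delta>>0. \<forall>m x \<xi>. x 0 = a \<and> x m = b \<and> (\<forall>i<m. x i \<le> \<xi> i \<and> \<xi> i \<le> x (Suc i) \<and> x (Suc i) - x i < \<delta>) \<longrightarrow>
        \<bar>(\<Sum>i<m. f (\<xi> i) * (h (x (Suc i)) - h (x i))) - I\<bar> < e"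
      using d(1) unfolding rs_sum_def by blast
  qed
  moreover have "J = I" if "has_rs_integral f h a b J" for J
    using has_rs_integral_imp_grid_rs_sum_tendsto[OF ab that] lim LIMSEQ_unique by blast
  ultimately show ?thesis
    unfolding rs_integral_def by (metis theI)
qed

lemma rs_sum_approx_rs_integral:
  assumes ab: "a < b" and fc: "continuous_on {a..b} f" and V: "variation_le h a b V" "V \<ge> 0"
    and d: "\<delta> > 0" and mc: "modulus_le f {a..b} \<delta> \<epsilon>"
    and P: "is_partition a b m x" and mesh: "\<forall>i<m. x (Suc i) - x i \<le> \<delta>"
    and tag: "\<forall>i<m. x i \<le> \<xi> i \<and> \<xi> i \<le> x (Suc i)"
  shows "\<bar>rs_sum f h m x \<xi> - rs_integral f h a b\<bar> \<le> 3 * \<epsilon> * V"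
  using has_rs_integral_imp_grid_rs_sum_tendsto[OF ab has_rs_integral_continuous[OF assms(1-4)]]
  by (rule rs_sum_close_to_grid_limit[OF ab V(1) _ d mc P mesh tag])

section \<open>Kernel sums and integrals of a Brownian bridge\<close>

lemma sum_increments_shift:
  fixes h g :: "real \<Rightarrow> real" and n k :: nat
  assumes hz: "\<forall>x\<in>{-1..0}. h x = 0" and kn: "k < n"
  shows "(\<Sum>i<n. (h ((real (Suc i) - real k) / real n) - h ((real i - real k) / real n)) * g i)
       = (\<Sum>j<n - k. (h (real (Suc j) / real n) - h (real j / real n)) * g (j + k))"
proof -
  define F where "F i = (h ((real (Suc i) - real k) / real n) - h ((real i - real k) / real n)) * g i" for i
  have "F i = 0" if "i < k" for i
  proof -
    have "(real (Suc i) - real k) / real n \<in> {-1..0}" "(real i - real k) / real n \<in> {-1..0}"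
      using that kn by (auto simp: field_simps)
    then show ?thesis unfolding F_def using hz by simp
  qed
  then have "(\<Sum>i<n. F i) = (\<Sum>i=k..<n. F i)"
    using kn sum.atLeastLessThan_concat[of 0 k n F] by (simp add: atLeast0LessThan)
  also have "\<dots> = (\<Sum>j<n - k. F (j + k))"
    using sum.shift_bounds_nat_ivl[of F 0 k "n - k"] kn by (simp add: atLeast0LessThan)
  finally show ?thesis unfolding F_def by (simp add: algebra_simps)
qed

lemma grid_partition_with_endpoint:
  fixes n m :: nat
  assumes n: "n > 0" and c: "real m / real n < c" "c - real m / real n \<le> 1 / real n"
  defines "x \<equiv> \<lambda>j. if j \<le> m then real j / real n else c"
  shows "is_partition 0 c (Suc m) x" "\<forall>j<Suc m. x (Suc j) - x j \<le> 1 / real n"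
proof -
  have step: "x j \<le> x (Suc j) \<and> x (Suc j) - x j \<le> 1 / real n" if "j < Suc m" for j
  proof (cases "j < m")
    case True
    then show ?thesis using n unfolding x_def by (simp add: divide_right_mono diff_divide_distrib[symmetric])
  next
    case False
    then have "j = m" using that by simp
    then show ?thesis using c unfolding x_def by simp
  qed
  then show "is_partition 0 c (Suc m) x" unfolding is_partition_def x_def by simp
  show "\<forall>j<Suc m. x (Suc j) - x j \<le> 1 / real n" using step by blast
qed

lemma floor_last_grid_cell:
  fixes n k m :: nat
  assumes k: "real k \<le> real n * t" "real n * t < real k + 1" and nk: "m + k + 1 = n"
  shows "real m / real n < 1 - t" "1 - t - real m / real n \<le> 1 / real n"
proof -
  have np: "real n > 0" using nk by simp
  have "1 - t - real m / real n = (real k + 1 - real n * t) / real n"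
    using nk np by (auto simp: field_simps)
  moreover have "(real k + 1 - real n * t) / real n \<in> {0<..1 / real n}"
    using k np by (auto simp: divide_right_mono)
  ultimately show "real m / real n < 1 - t" "1 - t - real m / real n \<le> 1 / real n" by auto
qed

lemma reflected_grid_sum_close:
  fixes Bf h :: "real \<Rightarrow> real" and n k m :: nat
  assumes k: "real k \<le> real n * t" "real n * t < real k + 1" and nk: "m + k + 1 = n"
    and t: "0 < t" "t < 1" and V: "variation_le h (-1) 1 V"
    and B0: "Bf 0 = 0" and mc: "modulus_le Bf {0..1} (2 / real n) \<epsilon>"
  defines "x \<equiv> \<lambda>j. if j \<le> m then real j / real n else 1 - t"
  shows "\<bar>rs_sum (\<lambda>y. Bf (1 - t - y)) h (Suc m) x x
      - (\<Sum>j<Suc m. (h (real (Suc j) / real n) - h (real j / real n)) * Bf (1 - real (j + k) / real n))\<bar>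
      \<le> 2 * \<epsilon> * V"
proof -
  have np: "real n > 0" using nk by simp
  have n12: "1 / real n \<le> 2 / real n" "1 / real n \<le> 1" using nk np by (auto simp: divide_right_mono)
  have e0: "\<epsilon> \<ge> 0" using modulus_le_nonneg[OF mc, of 0] np by simp
  define H where "H j = (h (real (Suc j) / real n) - h (real j / real n)) * Bf (1 - real (j + k) / real n)" for j
  define f where "f y = Bf (1 - t - y)" for y
  note last_cell = floor_last_grid_cell[OF k nk]
  have P: "is_partition 0 (1 - t) (Suc m) x"
    using grid_partition_with_endpoint[OF _ last_cell] np unfolding x_def by auto
  have Bsmall: "\<bar>Bf s\<bar> \<le> \<epsilon>" if "0 \<le> s" "s \<le> 1 / real n" for s
  proof -
    have "\<bar>Bf s - Bf 0\<bar> \<le> \<epsilon>"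
      by (intro mc[unfolded modulus_le_def, rule_format]) (use that n12 in auto)
    then show ?thesis using B0 by simp
  qed
  have inner: "\<bar>f (x j) * (h (x (Suc j)) - h (x j)) - H j\<bar> \<le> \<epsilon> * \<bar>h (x (Suc j)) - h (x j)\<bar>"
    if j: "j < m" for j
  proof -
    have xj: "x j = real j / real n" "x (Suc j) = real (Suc j) / real n" using j unfolding x_def by auto
    have "real j + 2 \<le> real n - real k" using j nk by linarith
    then have "1 - t - real j / real n \<in> {0..1}" using k t np by (auto simp: field_simps)
    moreover have "1 - real (j + k) / real n \<in> {0..1}" using j nk np by (auto simp: field_simps)
    moreover have "\<bar>(1 - t - real j / real n) - (1 - real (j + k) / real n)\<bar> \<le> 2 / real n"
    proof -
      have "\<bar>real k - real n * t\<bar> \<le> 2" using k by auto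
      then have "\<bar>real k - real n * t\<bar> / real n \<le> 2 / real n" using np by (simp add: divide_right_mono)
      moreover have "(1 - t - real j / real n) - (1 - real (j + k) / real n) = (real k - real n * t) / real n"
        using np by (simp add: field_simps)
      ultimately show ?thesis by simp
    qed
    ultimately have "\<bar>Bf (1 - t - real j / real n) - Bf (1 - real (j + k) / real n)\<bar> \<le> \<epsilon>"
      using mc unfolding modulus_le_def by blast
    moreover have "\<bar>A * D - D * C\<bar> = \<bar>A - C\<bar> * \<bar>D\<bar>" for A C D :: real
      by (simp add: algebra_simps abs_mult[symmetric])
    ultimately show ?thesis
      unfolding xj H_def f_def by (simp add: mult_right_mono)
  qed
  have last: "\<bar>f (x m) * (h (x (Suc m)) - h (x m)) - H m\<bar> \<le> \<epsilon> * \<bar>h (x (Suc m)) - h (x m)\<bar> + \<epsilon> * V"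
  proof -
    have xm: "x m = real m / real n" "x (Suc m) = 1 - t" unfolding x_def by auto
    have f1: "\<bar>f (x m)\<bar> \<le> \<epsilon>" unfolding xm f_def by (rule Bsmall) (use last_cell in auto)
    have "1 - real (m + k) / real n = 1 / real n" using nk np by (simp add: field_simps)
    then have f2: "\<bar>Bf (1 - real (m + k) / real n)\<bar> \<le> \<epsilon>" using Bsmall np by simp
    have hv: "\<bar>h (real (Suc m) / real n) - h (real m / real n)\<bar> \<le> V"
    proof (rule variation_le_two_points[OF V])
      have "0 \<le> real m / real n" using np by simp
      then show "-1 \<le> real m / real n" by linarith
      show "real m / real n \<le> real (Suc m) / real n" using np by (simp add: divide_right_mono)
      show "real (Suc m) / real n \<le> 1" using nk np by (simp add: field_simps)
    qed
    have "\<bar>f (x m) * (h (x (Suc m)) - h (x m)) - H m\<bar>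
        \<le> \<bar>f (x m)\<bar> * \<bar>h (x (Suc m)) - h (x m)\<bar>
           + \<bar>Bf (1 - real (m + k) / real n)\<bar> * \<bar>h (real (Suc m) / real n) - h (real m / real n)\<bar>"
      unfolding H_def by (simp add: abs_mult[symmetric] abs_triangle_ineq4 mult.commute)
    also have "\<dots> \<le> \<epsilon> * \<bar>h (x (Suc m)) - h (x m)\<bar> + \<epsilon> * V"
      by (intro add_mono mult_mono f1 f2 hv) (use e0 in auto)
    finally show ?thesis .
  qed
  have split_last: "rs_sum f h (Suc m) x x - (\<Sum>j<Suc m. H j)
      = (\<Sum>j<m. f (x j) * (h (x (Suc j)) - h (x j)) - H j) + (f (x m) * (h (x (Suc m)) - h (x m)) - H m)"
    unfolding rs_sum_def by (simp add: sum_subtractf)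
  have "\<bar>rs_sum f h (Suc m) x x - (\<Sum>j<Suc m. H j)\<bar>
      \<le> (\<Sum>j<m. \<bar>f (x j) * (h (x (Suc j)) - h (x j)) - H j\<bar>) + \<bar>f (x m) * (h (x (Suc m)) - h (x m)) - H m\<bar>"
    unfolding split_last by (rule order.trans[OF abs_triangle_ineq add_mono[OF sum_abs order_refl]])
  also have "\<dots> \<le> (\<Sum>j<m. \<epsilon> * \<bar>h (x (Suc j)) - h (x j)\<bar>) + (\<epsilon> * \<bar>h (x (Suc m)) - h (x m)\<bar> + \<epsilon> * V)"
  proof (rule add_mono)
    show "(\<Sum>j<m. \<bar>f (x j) * (h (x (Suc j)) - h (x j)) - H j\<bar>) \<le> (\<Sum>j<m. \<epsilon> * \<bar>h (x (Suc j)) - h (x j)\<bar>)"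
      by (rule sum_mono) (simp add: inner)
  qed (rule last)
  also have "\<dots> = \<epsilon> * (\<Sum>j<Suc m. \<bar>h (x (Suc j)) - h (x j)\<bar>) + \<epsilon> * V"
    unfolding sum.lessThan_Suc sum_distrib_left distrib_left by (simp only: add.assoc)
  also have "\<dots> \<le> \<epsilon> * V + \<epsilon> * V"
    using mult_left_mono[OF variation_le_partition[OF variation_le_subinterval[OF V] P] e0] t
    by (simp add: mult.commute)
  finally show ?thesis unfolding H_def f_def by (simp add: algebra_simps)
qed

text \<open>The discrete kernel sum is a left Riemann--Stieltjes sum for the integral over the partition
  of [0, 1 - t] by the points j/n: the reflection y \<mapsto> 1 - t - y moves each node by less than 2/n,
  and only the last, incomplete cell needs B(s) \<approx> B(0) = 0 for s \<le> 1/n.\<close>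

lemma kernel_sum_approx_rs_integral:
  fixes Bf h :: "real \<Rightarrow> real" and n k :: nat
  assumes n: "n \<ge> 1" and k: "real k \<le> real n * t" "real n * t < real k + 1"
    and t: "0 < t" "t < 1" and V: "variation_le h (-1) 1 V" "V \<ge> 0" and hz: "\<forall>x\<in>{-1..0}. h x = 0"
    and Bc: "continuous_on {0..1} Bf" and B0: "Bf 0 = 0" and mc: "modulus_le Bf {0..1} (2 / real n) \<epsilon>"
  shows "\<bar>(\<Sum>i<n. (h ((real (Suc i) - real k) / real n) - h ((real i - real k) / real n)) * Bf (1 - real i / real n))
          - rs_integral (\<lambda>y. Bf (1 - t - y)) h 0 (1 - t)\<bar> \<le> 5 * \<epsilon> * V"
proof -
  have np: "real n > 0" using n by simp
  have "real n * t < real n" using np t by simp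
  then have kn: "k < n" using k(1) by simp
  define m where "m = n - k - 1"
  have nk: "m + k + 1 = n" "Suc m = n - k" using kn unfolding m_def by auto
  define x where "x j = (if j \<le> m then real j / real n else 1 - t)" for j
  define f where "f y = Bf (1 - t - y)" for y
  note grid = grid_partition_with_endpoint[OF _ floor_last_grid_cell[OF k nk(1)], folded x_def]
  have P: "is_partition 0 (1 - t) (Suc m) x" and mesh: "\<forall>j<Suc m. x (Suc j) - x j \<le> 1 / real n"
    using grid np by auto
  have "1 / real n \<le> 2 / real n" using np by (simp add: divide_right_mono)
  then have "modulus_le f {0..1-t} (1 / real n) \<epsilon>"
    unfolding modulus_le_def f_def
    by (intro ballI impI mc[unfolded modulus_le_def, rule_format]) (use t in auto)
  moreover have "continuous_on {0..1-t} f"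
    unfolding f_def by (rule continuous_on_compose2[OF Bc]) (use t in \<open>auto intro!: continuous_intros\<close>)
  moreover have "\<forall>i<Suc m. x i \<le> x i \<and> x i \<le> x (Suc i)" using P by (simp add: is_partition_def)
  ultimately have "\<bar>rs_sum f h (Suc m) x x - rs_integral f h 0 (1 - t)\<bar> \<le> 3 * \<epsilon> * V"
    using variation_le_subinterval[OF V(1)] t np
    by (intro rs_sum_approx_rs_integral[OF _ _ _ V(2) _ _ P mesh]) auto
  moreover have "(\<Sum>i<n. (h ((real (Suc i) - real k) / real n) - h ((real i - real k) / real n)) * Bf (1 - real i / real n))
      = (\<Sum>j<Suc m. (h (real (Suc j) / real n) - h (real j / real n)) * Bf (1 - real (j + k) / real n))"
    unfolding nk(2) by (rule sum_increments_shift[OF hz kn])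
  ultimately show ?thesis
    using reflected_grid_sum_close[OF k nk(1) t V(1) B0 mc, folded x_def] unfolding f_def by linarith
qed

lemma sum_by_parts_lessThan:
  fixes a T :: "nat \<Rightarrow> real"
  shows "(\<Sum>i<n. a (Suc i) * (T (Suc i) - T i)) = a n * T n - a 0 * T 0 - (\<Sum>i<n. (a (Suc i) - a i) * T i)"
  by (induction n) (simp_all add: algebra_simps)

lemma centered_weighted_sum_by_parts:
  fixes a e :: "nat \<Rightarrow> real" and n :: nat
  defines "T \<equiv> \<lambda>j. (\<Sum>i=1..j. e i) - real j / real n * (\<Sum>i=1..n. e i)"
  shows "(\<Sum>i=1..n. a i * (e i - (1 / real n) * (\<Sum>l=1..n. e l))) = - (\<Sum>i<n. (a (Suc i) - a i) * T i)"
proof -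
  have "T 0 = 0" "T n = 0" unfolding T_def by auto
  moreover have "e (Suc i) - (1 / real n) * (\<Sum>l=1..n. e l) = T (Suc i) - T i" for i
    unfolding T_def by (simp add: field_simps add_divide_distrib)
  ultimately show ?thesis
    using sum_by_parts_lessThan[of a T n] by (simp add: sum.atLeast1_atMost_eq)
qed

lemma centered_partial_sums_close:
  fixes e :: "nat \<Rightarrow> real" and w :: "real \<Rightarrow> real" and n i :: nat
  assumes n: "n \<ge> 1" and w0: "w 0 = 0" and D: "\<forall>k\<in>{1..n}. \<bar>(\<Sum>l=1..k. e l) - c * w (real k)\<bar> \<le> D"
    and i: "i \<le> n"
  shows "\<bar>((\<Sum>l=1..i. e l) - real i / real n * (\<Sum>l=1..n. e l)) - c * (w (real i) - real i / real n * w (real n))\<bar>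
    \<le> 2 * D"
proof (cases "i = 0")
  case True
  have "D \<ge> 0" using D n by (meson abs_ge_zero atLeastAtMost_iff order.trans order_refl)
  then show ?thesis using True w0 by simp
next
  case False
  have d1: "\<bar>(\<Sum>l=1..i. e l) - c * w (real i)\<bar> \<le> D" using D i False by auto
  have d2: "\<bar>(\<Sum>l=1..n. e l) - c * w (real n)\<bar> \<le> D" using D n by auto
  have r: "0 \<le> real i / real n" "real i / real n \<le> 1" using i n by auto
  have "\<bar>real i / real n * ((\<Sum>l=1..n. e l) - c * w (real n))\<bar> \<le> 1 * D"
    unfolding abs_mult using r d2 by (intro mult_mono) auto
  then have "\<bar>((\<Sum>l=1..i. e l) - c * w (real i)) - real i / real n * ((\<Sum>l=1..n. e l) - c * w (real n))\<bar>
      \<le> D + 1 * D"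
    by (rule order.trans[OF abs_triangle_ineq4 add_mono[OF d1]])
  then show ?thesis by (simp add: algebra_simps)
qed

text \<open>Summation by parts turns the centred kernel sum into a sum of increments of h against the
  centred partial sums T; replacing T by the bridge values of the approximating Wiener path costs
  2 D per term, and the resulting sum is the kernel sum of the bridge.\<close>

lemma centered_kernel_sum_approx_bridge_integral:
  fixes e :: "nat \<Rightarrow> real" and w Bf h :: "real \<Rightarrow> real" and n :: nat and t lam V D \<epsilon> :: real
  assumes n: "n \<ge> 1" and t: "0 < t" "t < 1" and lam: "lam \<ge> 0"
    and V: "variation_le h (-1) 1 V" "V \<ge> 0" and hz: "\<forall>x\<in>{-1..0}. h x = 0"
    and Bc: "continuous_on {0..1} Bf" and mc: "modulus_le Bf {0..1} (2 / real n) \<epsilon>"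
    and hB: "\<forall>i\<le>n. Bf (1 - real i / real n) = - (w (real i) - real i / real n * w (real n)) / sqrt (real n)"
    and w0: "w 0 = 0"
    and D: "\<forall>k\<in>{1..n}. \<bar>(\<Sum>i=1..k. e i) - sqrt lam * w (real k)\<bar> \<le> D"
  shows "\<bar>(1 / sqrt (real n)) * (\<Sum>i=1..n. h (real_of_int (int i - \<lfloor>real n * t\<rfloor>) / real n) *
            (e i - (1 / real n) * (\<Sum>l=1..n. e l)))
          - sqrt lam * rs_integral (\<lambda>y. Bf (1 - t - y)) h 0 (1 - t)\<bar>
        \<le> 2 * V * D / sqrt (real n) + 5 * sqrt lam * \<epsilon> * V"
proof -
  have np: "real n > 0" using n by simp
  have sp: "sqrt (real n) > 0" using np by simp
  define k where "k = nat \<lfloor>real n * t\<rfloor>"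
  have rk: "real k = real_of_int \<lfloor>real n * t\<rfloor>" unfolding k_def using np t by simp
  have k: "real k \<le> real n * t" "real n * t < real k + 1" unfolding rk by linarith+
  have "real n * t < real n" using np t by simp
  then have kn: "real k \<le> real n" using k by simp
  define a where "a i = h ((real i - real k) / real n)" for i
  define T where "T j = (\<Sum>i=1..j. e i) - real j / real n * (\<Sum>i=1..n. e i)" for j
  define U where "U j = sqrt lam * (w (real j) - real j / real n * w (real n))" for j
  define I where "I = rs_integral (\<lambda>y. Bf (1 - t - y)) h 0 (1 - t)"
  define Q where "Q = (\<Sum>i<n. (a (Suc i) - a i) * Bf (1 - real i / real n))"
  have LHS: "(\<Sum>i=1..n. h (real_of_int (int i - \<lfloor>real n * t\<rfloor>) / real n) * (e i - (1 / real n) * (\<Sum>l=1..n. e l)))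
      = - (\<Sum>i<n. (a (Suc i) - a i) * T i)"
    using centered_weighted_sum_by_parts[of a e n] unfolding T_def a_def rk by simp
  have B0: "Bf 0 = 0" using hB np by (elim allE[of _ n]) simp
  have QI: "\<bar>Q - I\<bar> \<le> 5 * \<epsilon> * V"
    unfolding Q_def I_def a_def by (rule kernel_sum_approx_rs_integral[OF n k t V hz Bc B0 mc])
  have sQ: "sqrt lam * Q = - (1 / sqrt (real n)) * (\<Sum>i<n. (a (Suc i) - a i) * U i)"
  proof -
    have "sqrt lam * Q = (\<Sum>i<n. (a (Suc i) - a i) * (- U i / sqrt (real n)))"
      unfolding Q_def sum_distrib_left by (rule sum.cong) (use hB in \<open>auto simp: U_def algebra_simps\<close>)
    then show ?thesis by (simp add: sum_distrib_left sum_negf)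
  qed
  have D0: "D \<ge> 0" using D n by (meson abs_ge_zero atLeastAtMost_iff order.trans order_refl)
  have TU: "\<bar>T i - U i\<bar> \<le> 2 * D" if "i \<le> n" for i
    using centered_partial_sums_close[OF n w0 D that] unfolding T_def U_def .
  have varA: "(\<Sum>i<n. \<bar>a (Suc i) - a i\<bar>) \<le> V"
    using V(1) unfolding variation_le_def a_def
    by (elim allE[of _ n] allE[of _ "\<lambda>i. (real i - real k) / real n"])
       (use np kn in \<open>auto simp: field_simps divide_right_mono\<close>)
  have "\<bar>\<Sum>i<n. (a (Suc i) - a i) * (U i - T i)\<bar> \<le> (\<Sum>i<n. \<bar>a (Suc i) - a i\<bar> * (2 * D))"
  proof (rule order.trans[OF sum_abs sum_mono])
    fix i assume "i \<in> {..<n}"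
    then show "\<bar>(a (Suc i) - a i) * (U i - T i)\<bar> \<le> \<bar>a (Suc i) - a i\<bar> * (2 * D)"
      using TU[of i] unfolding abs_mult by (intro mult_left_mono) (auto simp: abs_minus_commute)
  qed
  also have "\<dots> \<le> V * (2 * D)"
    using varA D0 by (simp add: sum_distrib_right[symmetric] mult_right_mono)
  finally have dsum: "\<bar>\<Sum>i<n. (a (Suc i) - a i) * (U i - T i)\<bar> \<le> V * (2 * D)" .
  have by_parts: "(1 / sqrt (real n)) * (- (\<Sum>i<n. (a (Suc i) - a i) * T i)) - sqrt lam * I
      = (1 / sqrt (real n)) * (\<Sum>i<n. (a (Suc i) - a i) * (U i - T i)) + sqrt lam * (Q - I)"
  proof -
    have alg: "c * (- x) - s * i = c * (y - x) + s * (q - i)" if "s * q = - c * y" for c x s i y q :: real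
      using that by (simp add: algebra_simps)
    have "(\<Sum>i<n. (a (Suc i) - a i) * (U i - T i))
        = (\<Sum>i<n. (a (Suc i) - a i) * U i) - (\<Sum>i<n. (a (Suc i) - a i) * T i)"
      by (simp add: right_diff_distrib sum_subtractf)
    then show ?thesis by (simp only: alg[OF sQ])
  qed
  have "\<bar>(1 / sqrt (real n)) * (\<Sum>i<n. (a (Suc i) - a i) * (U i - T i)) + sqrt lam * (Q - I)\<bar>
      \<le> (1 / sqrt (real n)) * (V * (2 * D)) + sqrt lam * (5 * \<epsilon> * V)"
  proof (rule order.trans[OF abs_triangle_ineq add_mono])
    show "\<bar>1 / sqrt (real n) * (\<Sum>i<n. (a (Suc i) - a i) * (U i - T i))\<bar> \<le> 1 / sqrt (real n) * (V * (2 * D))"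
      using dsum sp by (simp add: abs_mult divide_right_mono)
    show "\<bar>sqrt lam * (Q - I)\<bar> \<le> sqrt lam * (5 * \<epsilon> * V)"
      using QI lam by (simp add: abs_mult mult_left_mono)
  qed
  then show ?thesis unfolding LHS I_def[symmetric] by_parts by (simp add: algebra_simps)
qed

section \<open>Dyadic chaining\<close>

definition dyadic_index :: "nat \<Rightarrow> real \<Rightarrow> nat" where
  "dyadic_index k u = nat \<lfloor>u * 2 ^ k\<rfloor>"

lemma dyadic_index_bounds:
  assumes "0 \<le> u" "u \<le> 1"
  shows "real (dyadic_index k u) \<le> u * 2 ^ k" "u * 2 ^ k < real (dyadic_index k u) + 1"
    "dyadic_index k u \<le> 2 ^ k" "real (dyadic_index k u) / 2 ^ k \<in> {0..1}"
proof -
  have r: "real (dyadic_index k u) = real_of_int \<lfloor>u * 2 ^ k\<rfloor>" unfolding dyadic_index_def using assms by simp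
  show a: "real (dyadic_index k u) \<le> u * 2 ^ k" unfolding r by linarith
  show "u * 2 ^ k < real (dyadic_index k u) + 1" unfolding r by linarith
  have "u * 2 ^ k \<le> 2 ^ k" using assms by simp
  then have c: "real (dyadic_index k u) \<le> 2 ^ k" using a by linarith
  then have "real (dyadic_index k u) \<le> real ((2::nat) ^ k)" by simp
  then show "dyadic_index k u \<le> 2 ^ k" by linarith
  show "real (dyadic_index k u) / 2 ^ k \<in> {0..1}" using c by simp
qed

lemma dyadic_index_Suc:
  assumes "0 \<le> u"
  shows "dyadic_index (Suc k) u = 2 * dyadic_index k u \<or> dyadic_index (Suc k) u = 2 * dyadic_index k u + 1"
proof -
  have "2 * \<lfloor>x\<rfloor> \<le> \<lfloor>2 * x\<rfloor>" "\<lfloor>2 * x\<rfloor> < 2 * \<lfloor>x\<rfloor> + 2" for x :: real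
    by (simp add: le_floor_iff; linarith?) (simp add: floor_less_iff; linarith?)
  note this[of "u * 2 ^ k"]
  moreover have "\<lfloor>u * 2 ^ k\<rfloor> \<ge> 0" using assms by simp
  ultimately show ?thesis
    unfolding dyadic_index_def power_Suc by (auto simp: nat_mult_distrib nat_add_distrib mult_ac)
qed

lemma tendsto_dyadic_index:
  assumes "0 \<le> u" "u \<le> 1"
  shows "(\<lambda>N. real (dyadic_index N u) / 2 ^ N) \<longlonglongrightarrow> u"
proof (rule LIM_zero_cancel, rule Lim_null_comparison)
  show "\<forall>\<^sub>F N in sequentially. norm (real (dyadic_index N u) / 2 ^ N - u) \<le> inverse (2 ^ N)"
  proof (intro always_eventually allI)
    fix N
    have below: "real (dyadic_index N u) / 2 ^ N \<le> u"
      using dyadic_index_bounds(1)[OF assms] by (simp add: divide_le_eq)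
    have "u - real (dyadic_index N u) / 2 ^ N = (u * 2 ^ N - real (dyadic_index N u)) / 2 ^ N"
      by (simp add: field_simps)
    also have "\<dots> < 1 / 2 ^ N"
      using dyadic_index_bounds(2)[OF assms, of N] by (intro divide_strict_right_mono) auto
    finally show "norm (real (dyadic_index N u) / 2 ^ N - u) \<le> inverse (2 ^ N)"
      using below by (simp add: inverse_eq_divide)
  qed
  show "(\<lambda>N. inverse ((2::real) ^ N)) \<longlonglongrightarrow> 0" by (rule LIMSEQ_inverse_realpow_zero) simp
qed

text \<open>Following the dyadic approximations of u from level K on, the increments form a geometric
  series with sum at most 10 (9/10)^(K+1) = 9 (9/10)^K.\<close>

lemma dyadic_chain_bound:
  fixes f :: "real \<Rightarrow> real" and K :: nat
  assumes fc: "continuous_on {0..1} f"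
    and inc: "\<forall>k\<ge>K. \<forall>j<2^k. \<bar>f (real (Suc j) / 2^k) - f (real j / 2^k)\<bar> \<le> (9/10)^k"
    and u: "0 \<le> u" "u \<le> 1"
  shows "\<bar>f u - f (real (dyadic_index K u) / 2 ^ K)\<bar> \<le> 9 * (9/10) ^ K"
proof -
  define g where "g k = f (real (dyadic_index k u) / 2 ^ k)" for k
  have level_step: "\<bar>g (Suc k) - g k\<bar> \<le> (9/10) ^ Suc k" if k: "k \<ge> K" for k
  proof -
    have e: "real (dyadic_index k u) / 2 ^ k = real (2 * dyadic_index k u) / 2 ^ Suc k" by simp
    consider "dyadic_index (Suc k) u = 2 * dyadic_index k u"
      | "dyadic_index (Suc k) u = 2 * dyadic_index k u + 1"
      using dyadic_index_Suc[OF u(1)] by blast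
    then show ?thesis
    proof cases
      case 2
      then have "2 * dyadic_index k u < 2 ^ Suc k" using dyadic_index_bounds(3)[OF u, of "Suc k"] by simp
      then have "\<bar>f (real (Suc (2 * dyadic_index k u)) / 2 ^ Suc k) - f (real (2 * dyadic_index k u) / 2 ^ Suc k)\<bar>
          \<le> (9/10) ^ Suc k"
        using k by (intro inc[rule_format]) auto
      then show ?thesis using 2 unfolding g_def e by simp
    qed (unfold g_def e, simp)
  qed
  have partial: "\<bar>g N - g K\<bar> \<le> 10 * (9/10) ^ Suc K - 10 * (9/10) ^ Suc N" if "K \<le> N" for N
    using that
  proof (induction N rule: dec_induct)
    case (step N)
    have "\<bar>g (Suc N) - g K\<bar> \<le> \<bar>g N - g K\<bar> + \<bar>g (Suc N) - g N\<bar>" by linarith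
    also have "\<dots> \<le> (10 * (9/10) ^ Suc K - 10 * (9/10) ^ Suc N) + (9/10) ^ Suc N"
      using step.IH step.hyps by (intro add_mono level_step) auto
    also have "\<dots> = 10 * (9/10) ^ Suc K - 10 * (9/10) ^ Suc (Suc N)" by simp
    finally show ?case .
  qed simp
  have "g \<longlonglongrightarrow> f u"
    unfolding g_def by (rule continuous_on_tendsto_compose[OF fc tendsto_dyadic_index[OF u]])
      (use dyadic_index_bounds(4)[OF u] u in auto)
  then have "(\<lambda>N. \<bar>g N - g K\<bar>) \<longlonglongrightarrow> \<bar>f u - g K\<bar>"
    by (intro tendsto_intros)
  moreover have "\<forall>\<^sub>F N in sequentially. \<bar>g N - g K\<bar> \<le> 9 * (9/10) ^ K"
  proof (rule eventually_sequentiallyI[of K])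
    fix N assume "K \<le> N"
    then have "\<bar>g N - g K\<bar> \<le> 10 * (9/10) ^ Suc K - 10 * (9/10) ^ Suc N" by (rule partial)
    also have "\<dots> \<le> 9 * (9/10) ^ K" by simp
    finally show "\<bar>g N - g K\<bar> \<le> 9 * (9/10) ^ K" .
  qed
  ultimately show ?thesis unfolding g_def by (rule tendsto_upperbound) simp
qed

lemma modulus_le_of_dyadic_increments:
  fixes f :: "real \<Rightarrow> real" and K :: nat
  assumes fc: "continuous_on {0..1} f"
    and inc: "\<forall>k\<ge>K. \<forall>j<2^k. \<bar>f (real (Suc j) / 2^k) - f (real j / 2^k)\<bar> \<le> (9/10)^k"
  shows "modulus_le f {0..1} (1 / 2^K) (19 * (9/10)^K)"
proof -
  have main: "\<bar>f u - f v\<bar> \<le> 19 * (9/10) ^ K"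
    if uv: "0 \<le> u" "u \<le> v" "v \<le> 1" "v - u \<le> 1 / 2 ^ K" for u v
  proof -
    have u: "0 \<le> u" "u \<le> 1" and v: "0 \<le> v" "v \<le> 1" using uv by auto
    define i where "i = dyadic_index K u"
    define j where "j = dyadic_index K v"
    have "v * 2 ^ K - u * 2 ^ K \<le> 1" using uv(4) by (simp add: field_simps)
    then have "real j < real i + 2"
      using dyadic_index_bounds(1,2)[OF u, of K] dyadic_index_bounds(1,2)[OF v, of K] unfolding i_def j_def
      by linarith
    moreover have "i \<le> j" unfolding i_def j_def dyadic_index_def
      using uv by (intro nat_mono floor_mono) simp
    ultimately consider "j = i" | "j = Suc i" by linarith
    then have "\<bar>f (real i / 2 ^ K) - f (real j / 2 ^ K)\<bar> \<le> (9/10) ^ K"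
    proof cases
      case 2
      then have "i < 2 ^ K" using dyadic_index_bounds(3)[OF v, of K] unfolding j_def by simp
      then show ?thesis using inc 2 by (auto simp: abs_minus_commute)
    qed simp
    moreover have "\<bar>f u - f (real i / 2 ^ K)\<bar> \<le> 9 * (9/10) ^ K" "\<bar>f v - f (real j / 2 ^ K)\<bar> \<le> 9 * (9/10) ^ K"
      unfolding i_def j_def using dyadic_chain_bound[OF fc inc] u v by auto
    ultimately show ?thesis by linarith
  qed
  show ?thesis unfolding modulus_le_def
  proof (intro ballI impI)
    fix u v :: real assume "u \<in> {0..1}" "v \<in> {0..1}" "\<bar>u - v\<bar> \<le> 1 / 2 ^ K"
    then show "\<bar>f u - f v\<bar> \<le> 19 * (9 / 10) ^ K"
      using main[of u v] main[of v u] by (cases "u \<le> v") (auto simp: abs_minus_commute)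
  qed
qed

section \<open>Dyadic jumps of a Brownian bridge\<close>

lemma normal_rv_fourth_moment:
  assumes D: "normal_rv M X 0 s2" and s2: "s2 > 0"
  shows "integrable M (\<lambda>\<omega>. X \<omega> ^ 4)" "(\<integral>\<omega>. X \<omega> ^ 4 \<partial>M) = 3 * s2^2"
proof -
  define \<sigma> where "\<sigma> = sqrt s2"
  have sp: "\<sigma> > 0" using s2 unfolding \<sigma>_def by simp
  have D: "distributed M lborel X (\<lambda>x. ennreal (normal_density 0 \<sigma> x))"
    using D s2 unfolding normal_rv_def \<sigma>_def by simp
  have g: "(\<lambda>x::real. x ^ 4) \<in> borel_measurable lborel" by measurable
  have "integrable lborel (\<lambda>x. normal_density 0 \<sigma> x * (x - 0) ^ 4)"
    using integrable_normal_moment[where k=4 and \<mu>=0 and \<sigma>=\<sigma>] sp by simp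
  then show "integrable M (\<lambda>\<omega>. X \<omega> ^ 4)"
    using distributed_integrable[OF D g] by simp
  have "(\<integral>\<omega>. X \<omega> ^ 4 \<partial>M) = (\<integral>x. normal_density 0 \<sigma> x * x ^ 4 \<partial>lborel)"
    using distributed_integral[OF D g] by simp
  also have "\<dots> = fact (2 * 2) / ((2 / \<sigma>\<^sup>2) ^ 2 * fact 2)"
    using integral_normal_moment_even[where k=2 and \<mu>=0 and \<sigma>=\<sigma>] sp by simp
  also have "\<dots> = 3 * s2^2"
    using sp s2 unfolding \<sigma>_def by (simp add: fact_numeral power2_eq_square field_simps)
  finally show "(\<integral>\<omega>. X \<omega> ^ 4 \<partial>M) = 3 * s2^2" .
qed

lemma normal_rv_tail_le:
  assumes P: "prob_space M" and N: "normal_rv M X 0 s2" and s: "s2 \<ge> 0" and a: "a > 0"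
  shows "measure M {\<omega>\<in>space M. a < \<bar>X \<omega>\<bar>} \<le> 3 * s2^2 / a^4"
proof -
  interpret prob_space M by (rule P)
  have Xm[measurable]: "X \<in> borel_measurable M" using N unfolding normal_rv_def by simp
  have Sm: "{\<omega>\<in>space M. a < \<bar>X \<omega>\<bar>} \<in> sets M" by measurable
  show ?thesis
  proof (cases "s2 = 0")
    case True
    then have "AE \<omega> in M. X \<omega> = 0" using N unfolding normal_rv_def by simp
    then have "AE \<omega> in M. \<not> (a < \<bar>X \<omega>\<bar>)" by eventually_elim (use a in auto)
    then have "emeasure M {\<omega>\<in>space M. a < \<bar>X \<omega>\<bar>} = 0"
      using AE_iff_measurable[OF Sm, of "\<lambda>\<omega>. \<not> (a < \<bar>X \<omega>\<bar>)"] by simp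
    then show ?thesis using True by (simp add: emeasure_eq_measure)
  next
    case False
    note moment = normal_rv_fourth_moment[OF N] False s
    have "{\<omega>\<in>space M. a < \<bar>X \<omega>\<bar>} \<subseteq> {\<omega>\<in>space M. a ^ 4 \<le> X \<omega> ^ 4}"
    proof safe
      fix \<omega> assume "a < \<bar>X \<omega>\<bar>"
      then have "a ^ 4 \<le> \<bar>X \<omega>\<bar> ^ 4" using a by (intro power_mono) auto
      then show "a ^ 4 \<le> X \<omega> ^ 4" by (simp add: power_even_abs)
    qed
    then have "measure M {\<omega>\<in>space M. a < \<bar>X \<omega>\<bar>} \<le> measure M {\<omega>\<in>space M. a ^ 4 \<le> X \<omega> ^ 4}"
      by (intro finite_measure_mono) measurable
    also have "\<dots> \<le> (\<integral>\<omega>. X \<omega> ^ 4 \<partial>M) / a ^ 4"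
      using moment a by (intro integral_Markov_inequality_measure[OF _ sets.top]) (auto simp: zero_le_even_power)
    finally show ?thesis using moment by simp
  qed
qed

lemma std_brownian_bridge_increment:
  assumes B: "std_brownian_bridge M B" and u: "u \<in> {0..1}" and v: "v \<in> {0..1}"
  shows "normal_rv M (\<lambda>\<omega>. B v \<omega> - B u \<omega>) 0 (\<bar>v - u\<bar> - (v - u)^2)"
proof -
  define ts :: "nat \<Rightarrow> real" where "ts i = (if i = 0 then v else u)" for i
  define cs :: "nat \<Rightarrow> real" where "cs i = (if i = 0 then 1 else -1)" for i
  have G: "centered_gaussian_process M {0..1} B (\<lambda>s t. min s t - s * t)"
    using B unfolding std_brownian_bridge_def by blast
  have "normal_rv M (\<lambda>\<omega>. \<Sum>i<2. cs i * B (ts i) \<omega>) 0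
          (\<Sum>i<2. \<Sum>j<2. cs i * cs j * (min (ts i) (ts j) - ts i * ts j))"
    using G u v unfolding centered_gaussian_process_def ts_def by auto
  moreover have "(\<lambda>\<omega>. \<Sum>i<2. cs i * B (ts i) \<omega>) = (\<lambda>\<omega>. B v \<omega> - B u \<omega>)"
    by (simp add: numeral_2_eq_2 cs_def ts_def)
  moreover have "(\<Sum>i<2. \<Sum>j<2. cs i * cs j * (min (ts i) (ts j) - ts i * ts j)) = \<bar>v - u\<bar> - (v - u)^2"
    by (simp add: numeral_2_eq_2 cs_def ts_def min_def abs_if power2_eq_square algebra_simps)
  ultimately show ?thesis by simp
qed

text \<open>Jumps of a Brownian bridge across dyadic intervals of level L are compared with (9/10)^L: by the
  fourth-moment tail bound a single jump exceeds it with probability 3 (2^-L)^2 / (9/10)^(4L), and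
  since 2 (9/10)^4 > 1 the sum over the 2^L intervals of each level decays geometrically.\<close>

definition dyadic_jump :: "'a measure \<Rightarrow> (real \<Rightarrow> 'a \<Rightarrow> real) \<Rightarrow> nat \<Rightarrow> nat \<Rightarrow> 'a set" where
  "dyadic_jump M B L j = {\<omega>\<in>space M. (9/10)^L < \<bar>B (real (Suc j) / 2^L) \<omega> - B (real j / 2^L) \<omega>\<bar>}"

definition large_dyadic_jumps :: "'a measure \<Rightarrow> (real \<Rightarrow> 'a \<Rightarrow> real) \<Rightarrow> nat \<Rightarrow> 'a set" where
  "large_dyadic_jumps M B K = (\<Union>k. \<Union>j\<in>{..<2^(k+K)}. dyadic_jump M B (k + K) j)"

lemma std_brownian_bridge_measurable:
  assumes B: "std_brownian_bridge M B" and t: "t \<in> {0..1}"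
  shows "B t \<in> borel_measurable M"
  using B t unfolding std_brownian_bridge_def centered_gaussian_process_def by blast

lemma dyadic_points_in_unit_interval:
  assumes "j < 2^L"
  shows "real j / 2^L \<in> {0..1}" "real (Suc j) / 2^L \<in> {0..1}"
proof -
  have "real (Suc j) \<le> 2^L" using assms by (metis Suc_leI of_nat_le_iff of_nat_numeral of_nat_power)
  moreover have "j \<le> 2^L" using assms by simp
  ultimately show "real j / 2^L \<in> {0..1}" "real (Suc j) / 2^L \<in> {0..1}" by simp_all
qed

lemma dyadic_jump_sets:
  assumes B: "std_brownian_bridge M B" and j: "j < 2^L"
  shows "dyadic_jump M B L j \<in> sets M"
proof -
  have [measurable]: "B (real (Suc j) / 2^L) \<in> borel_measurable M" "B (real j / 2^L) \<in> borel_measurable M"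
    using std_brownian_bridge_measurable[OF B] dyadic_points_in_unit_interval[OF j] by auto
  show ?thesis unfolding dyadic_jump_def by measurable
qed

lemma large_dyadic_jumps_sets:
  assumes B: "std_brownian_bridge M B"
  shows "large_dyadic_jumps M B K \<in> sets M"
  unfolding large_dyadic_jumps_def by (intro sets.countable_UN sets.finite_UN) (auto intro: dyadic_jump_sets[OF B])

lemma measure_dyadic_jump_le:
  assumes P: "prob_space M" and B: "std_brownian_bridge M B" and j: "j < 2^L"
  shows "measure M (dyadic_jump M B L j) \<le> 3 * (1/2^L)^2 / ((9/10)^L)^4"
proof -
  define u :: real where "u = real j / 2^L"
  define v :: real where "v = real (Suc j) / 2^L"
  have uv: "u \<in> {0..1}" "v \<in> {0..1}" using dyadic_points_in_unit_interval[OF j] unfolding u_def v_def by auto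
  have d: "v - u = 1 / 2^L" unfolding u_def v_def by (simp add: diff_divide_distrib[symmetric])
  define s2 where "s2 = \<bar>v - u\<bar> - (v - u)^2"
  have s2: "0 \<le> s2" "s2 \<le> 1/2^L"
  proof -
    have "(1::real)/2^L \<le> 1" by simp
    then have "(1/2^L)^2 \<le> (1::real)/2^L" using mult_left_mono[OF \<open>(1::real)/2^L \<le> 1\<close>, of "1/2^L"] by (simp add: power2_eq_square)
    then show "0 \<le> s2" "s2 \<le> 1/2^L" unfolding s2_def d by auto
  qed
  have "measure M (dyadic_jump M B L j) \<le> 3 * s2^2 / ((9/10)^L)^4"
    unfolding dyadic_jump_def u_def[symmetric] v_def[symmetric] s2_def
    by (rule normal_rv_tail_le[OF P std_brownian_bridge_increment[OF B uv(1) uv(2)] _ ]) (use s2(1)[unfolded s2_def] in auto)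
  also have "\<dots> \<le> 3 * (1/2^L)^2 / ((9/10)^L)^4"
    using s2 by (intro divide_right_mono mult_left_mono power_mono) auto
  finally show ?thesis .
qed

lemma measure_dyadic_level_le:
  assumes P: "prob_space M" and B: "std_brownian_bridge M B"
  shows "measure M (\<Union>j\<in>{..<2^L}. dyadic_jump M B L j) \<le> 3 * (5000 / 6561) ^ L"
proof -
  interpret prob_space M by (rule P)
  have "measure M (\<Union>j\<in>{..<2^L}. dyadic_jump M B L j) \<le> (\<Sum>j\<in>{..<2^L}. measure M (dyadic_jump M B L j))"
    by (rule finite_measure_subadditive_finite) (auto intro: dyadic_jump_sets[OF B])
  also have "\<dots> \<le> (\<Sum>j\<in>{..<(2::nat)^L}. 3 * (1/2^L)^2 / ((9/10)^L)^4)"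
    by (rule sum_mono) (use measure_dyadic_jump_le[OF P B] in auto)
  also have "\<dots> = 2^L * (3 * (1/2^L)^2 / ((9/10)^L)^4)" by simp
  also have "\<dots> = 3 / (2 ^ L * ((9/10)^4)^L)"
  proof -
    have "((9/10::real)^L)^4 = ((9/10)^4)^L" by (simp add: power_mult[symmetric] mult.commute)
    then show ?thesis by (simp add: power2_eq_square field_simps)
  qed
  also have "\<dots> = 3 * (1 / (2 * (9/10)^4)) ^ L"
    by (simp add: power_mult_distrib power_one_over)
  also have "(1 / (2 * (9/10::real)^4)) = 5000 / 6561"
    by (simp add: eval_nat_numeral)
  finally show ?thesis .
qed

lemma measure_large_dyadic_jumps_le:
  assumes P: "prob_space M" and B: "std_brownian_bridge M B"
  shows "measure M (large_dyadic_jumps M B K) \<le> 13 * (5000 / 6561) ^ K"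
proof -
  interpret prob_space M by (rule P)
  define r :: real where "r = 5000 / 6561"
  have r: "0 \<le> r" "r < 1" unfolding r_def by auto
  define A where "A k = (\<Union>j\<in>{..<2^(k+K)}. dyadic_jump M B (k + K) j)" for k
  have As: "range A \<subseteq> sets M" unfolding A_def by (auto intro!: sets.finite_UN dyadic_jump_sets[OF B])
  have Ab: "measure M (A k) \<le> 3 * r^K * r^k" for k
    using measure_dyadic_level_le[OF P B, of "k + K"] unfolding A_def r_def by (simp add: power_add mult_ac)
  have sg: "summable (\<lambda>k. 3 * r^K * r^k)" using r by (intro summable_mult summable_geometric) auto
  have sA: "summable (\<lambda>k. measure M (A k))"
    by (rule summable_comparison_test[OF _ sg]) (use Ab in auto)
  have "measure M (large_dyadic_jumps M B K) = measure M (\<Union>(range A))" unfolding large_dyadic_jumps_def A_def by simp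
  also have "\<dots> \<le> (\<Sum>k. measure M (A k))" by (rule finite_measure_subadditive_countably[OF As sA])
  also have "\<dots> \<le> (\<Sum>k. 3 * r^K * r^k)" by (rule suminf_le[OF Ab sA sg])
  also have "\<dots> = (19683 / 1561) * r^K" using r by (simp add: suminf_mult suminf_geometric r_def)
  also have "\<dots> \<le> 13 * r^K" using r by (intro mult_right_mono) auto
  finally show ?thesis unfolding r_def .
qed

lemma measure_null_union_large_dyadic_jumps_le:
  fixes B :: "'d::finite \<Rightarrow> real \<Rightarrow> 'a \<Rightarrow> real"
  assumes P: "prob_space M" and N: "N \<in> null_sets M" and B: "\<forall>p. std_brownian_bridge M (B p)"
  shows "N \<union> (\<Union>p. large_dyadic_jumps M (B p) K) \<in> sets M"
    "measure M (N \<union> (\<Union>p. large_dyadic_jumps M (B p) K)) \<le> real CARD('d) * 13 * (5000 / 6561) ^ K"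
proof -
  interpret prob_space M by (rule P)
  have J: "(\<Union>p. large_dyadic_jumps M (B p) K) \<in> sets M"
    using large_dyadic_jumps_sets B by (intro sets.finite_UN) auto
  then show "N \<union> (\<Union>p. large_dyadic_jumps M (B p) K) \<in> sets M" using N by auto
  have "measure M (N \<union> (\<Union>p. large_dyadic_jumps M (B p) K)) = measure M (\<Union>p. large_dyadic_jumps M (B p) K)"
    using measure_Un_null_set[OF J N] by (simp add: Un_commute)
  also have "\<dots> \<le> (\<Sum>p\<in>UNIV. measure M (large_dyadic_jumps M (B p) K))"
    using large_dyadic_jumps_sets B by (intro finite_measure_subadditive_finite) auto
  also have "\<dots> \<le> (\<Sum>p\<in>(UNIV::'d set). 13 * (5000 / 6561) ^ K)"
    using measure_large_dyadic_jumps_le[OF P] B by (intro sum_mono) auto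
  finally show "measure M (N \<union> (\<Union>p. large_dyadic_jumps M (B p) K)) \<le> real CARD('d) * 13 * (5000 / 6561) ^ K"
    by simp
qed

lemma modulus_le_outside_large_dyadic_jumps:
  fixes B :: "real \<Rightarrow> 'a \<Rightarrow> real"
  assumes w: "\<omega> \<in> space M" "\<omega> \<notin> large_dyadic_jumps M B K" and c: "continuous_on {0..1} (\<lambda>t. B t \<omega>)"
  shows "modulus_le (\<lambda>t. B t \<omega>) {0..1} (1 / 2^K) (19 * (9/10)^K)"
proof (rule modulus_le_of_dyadic_increments[OF c], intro allI impI)
  fix k j :: nat assume k: "K \<le> k" and j: "j < 2^k"
  have kk: "(k - K) + K = k" using k by simp
  have "\<omega> \<notin> dyadic_jump M B ((k - K) + K) j"
  proof
    assume "\<omega> \<in> dyadic_jump M B ((k - K) + K) j"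
    moreover have "j \<in> {..<2^((k - K) + K)}" using j kk by simp
    ultimately have "\<omega> \<in> large_dyadic_jumps M B K" unfolding large_dyadic_jumps_def by blast
    then show False using w by simp
  qed
  then show "\<bar>B (real (Suc j) / 2 ^ k) \<omega> - B (real j / 2 ^ k) \<omega>\<bar> \<le> (9 / 10) ^ k"
    using w kk unfolding dyadic_jump_def by auto
qed

section \<open>Brownian bridges from Wiener processes\<close>

text \<open>At t = 1 - i/n this is -(W(i) - (i/n) W(n)) / \<surd>n, the Brownian bridge of the rescaled Wiener path
  read backwards in time, matching the reflection y \<mapsto> 1 - t - y in the integral of the bridge.\<close>

definition wiener_bridge :: "real \<Rightarrow> (real \<Rightarrow> 'a \<Rightarrow> real) \<Rightarrow> real \<Rightarrow> 'a \<Rightarrow> real" where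
  "wiener_bridge N w t \<omega> = ((1 - t) * w N \<omega> - w (N * (1 - t)) \<omega>) / sqrt N"

lemma wiener_bridge_grid:
  assumes "n > 0" "i \<le> n"
  shows "wiener_bridge (real n) w (1 - real i / real n) \<omega>
    = - (w (real i) \<omega> - real i / real n * w (real n) \<omega>) / sqrt (real n)"
  using assms unfolding wiener_bridge_def by (simp add: algebra_simps)

lemma continuous_on_wiener_bridge:
  assumes "N > 0" "continuous_on {0..} (\<lambda>t. w t \<omega>)"
  shows "continuous_on {0..1} (\<lambda>t. wiener_bridge N w t \<omega>)"
proof -
  have "continuous_on {0..1} (\<lambda>t. w (N * (1 - t)) \<omega>)"
    by (rule continuous_on_compose2[OF assms(2)]) (use assms(1) in \<open>auto intro!: continuous_intros\<close>)
  then show ?thesis unfolding wiener_bridge_def by (intro continuous_intros) (use assms(1) in auto)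
qed

lemma std_wiener_process_zero:
  assumes "std_wiener_process M w"
  shows "AE \<omega> in M. w 0 \<omega> = 0"
proof -
  have "normal_rv M (\<lambda>\<omega>. \<Sum>i<Suc 0. 1 * w 0 \<omega>) 0 (\<Sum>i<Suc 0. \<Sum>j<Suc 0. 1 * 1 * min 0 0)"
    using assms unfolding std_wiener_process_def centered_gaussian_process_def
    by (elim conjE allE[of _ "Suc 0"] allE[of _ "\<lambda>_. 0"] allE[of _ "\<lambda>_. 1"]) auto
  then show ?thesis unfolding normal_rv_def by simp
qed

text \<open>A combination of bridge values, \<Sum> c_i B(t_i), is the combination of the m + 1 Wiener values
  at N (1 - t_i) and at N with the coefficients cs' below; the covariances agree because
  min (N (1 - s)) (N (1 - t)) = N (1 - max s t).\<close>

lemma wiener_bridge_covariance_identity: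
  fixes cs ts :: "nat \<Rightarrow> real" and N :: real
  assumes N: "N > 0" and ts: "\<forall>i<m. ts i \<in> {0..1}"
  defines "A \<equiv> (\<Sum>i<m. cs i * (1 - ts i))"
  defines "ts' \<equiv> (\<lambda>i. if i < m then N * (1 - ts i) else N)"
  defines "cs' \<equiv> (\<lambda>i. if i < m then - cs i / sqrt N else A / sqrt N)"
  shows "(\<Sum>i<Suc m. \<Sum>j<Suc m. cs' i * cs' j * min (ts' i) (ts' j))
       = (\<Sum>i<m. \<Sum>j<m. cs i * cs j * (min (ts i) (ts j) - ts i * ts j))"
proof -
  have sN: "sqrt N * sqrt N = N" using N by simp
  have sNp: "sqrt N > 0" using N by simp
  have F1: "cs' i * cs' j * min (ts' i) (ts' j) = cs i * cs j * (1 - max (ts i) (ts j))" if "i < m" "j < m" for i j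
  proof -
    have mn: "min (N * (1 - ts i)) (N * (1 - ts j)) = N * (1 - max (ts i) (ts j))"
      using N by (auto simp: min_def max_def mult_le_cancel_left_pos)
    have "cs' i * cs' j * min (ts' i) (ts' j) = (cs i * cs j / (sqrt N * sqrt N)) * min (N * (1 - ts i)) (N * (1 - ts j))"
      using that unfolding cs'_def ts'_def by simp
    also have "\<dots> = cs i * cs j / N * (N * (1 - max (ts i) (ts j)))" unfolding sN mn ..
    also have "\<dots> = cs i * cs j * (1 - max (ts i) (ts j))" using N by simp
    finally show ?thesis .
  qed
  have F2: "cs' i * cs' m * min (ts' i) (ts' m) = - cs i * (1 - ts i) * A" if "i < m" for i
  proof -
    have "min (N * (1 - ts i)) N = N * (1 - ts i)" using N ts that by (auto simp: min_def mult_le_cancel_left_pos)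
    then show ?thesis using that sN sNp unfolding cs'_def ts'_def by (simp add: field_simps)
  qed
  have F3: "cs' m * cs' j * min (ts' m) (ts' j) = - cs j * (1 - ts j) * A" if "j < m" for j
  proof -
    have "min N (N * (1 - ts j)) = N * (1 - ts j)" using N ts that by (auto simp: min_def mult_le_cancel_left_pos)
    then show ?thesis using that sN sNp unfolding cs'_def ts'_def by (simp add: field_simps)
  qed
  have F4: "cs' m * cs' m * min (ts' m) (ts' m) = A * A"
    using sN sNp unfolding cs'_def ts'_def by (simp add: field_simps)
  have eq0: "(\<Sum>i<Suc m. \<Sum>j<Suc m. cs' i * cs' j * min (ts' i) (ts' j))
      = (\<Sum>i<m. \<Sum>j<m. cs' i * cs' j * min (ts' i) (ts' j)) + (\<Sum>i<m. cs' i * cs' m * min (ts' i) (ts' m))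
        + (\<Sum>j<m. cs' m * cs' j * min (ts' m) (ts' j)) + cs' m * cs' m * min (ts' m) (ts' m)"
    by (simp add: sum.distrib)
  have S1: "(\<Sum>i<m. \<Sum>j<m. cs' i * cs' j * min (ts' i) (ts' j)) = (\<Sum>i<m. \<Sum>j<m. cs i * cs j * (1 - max (ts i) (ts j)))"
    using F1 by simp
  have S2: "(\<Sum>i<m. cs' i * cs' m * min (ts' i) (ts' m)) = - A * A"
    using F2 unfolding A_def by (simp add: sum_distrib_right sum_negf)
  have S3: "(\<Sum>j<m. cs' m * cs' j * min (ts' m) (ts' j)) = - A * A"
    using F3 unfolding A_def by (simp add: sum_distrib_right sum_negf)
  have AA: "A * A = (\<Sum>i<m. \<Sum>j<m. cs i * cs j * ((1 - ts i) * (1 - ts j)))"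
    unfolding A_def by (simp add: sum_product algebra_simps)
  have R: "(\<Sum>i<m. \<Sum>j<m. cs i * cs j * (1 - max (ts i) (ts j))) - (\<Sum>i<m. \<Sum>j<m. cs i * cs j * ((1 - ts i) * (1 - ts j)))
        = (\<Sum>i<m. \<Sum>j<m. cs i * cs j * (min (ts i) (ts j) - ts i * ts j))"
  proof -
    have "cs i * cs j * (1 - max (ts i) (ts j)) - cs i * cs j * ((1 - ts i) * (1 - ts j))
        = cs i * cs j * (min (ts i) (ts j) - ts i * ts j)" for i j
      by (simp add: min_def max_def algebra_simps)
    then show ?thesis by (simp add: sum_subtractf[symmetric])
  qed
  show ?thesis using eq0 S1 S2 S3 F4 AA R by linarith
qed



lemma std_brownian_bridge_wiener_bridge:
  assumes N: "N > 0" and w: "std_wiener_process M w"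
  shows "std_brownian_bridge M (wiener_bridge N w)"
proof -
  have G: "centered_gaussian_process M {0..} w (\<lambda>s t. min s t)"
    and AEc: "AE \<omega> in M. continuous_on {0..} (\<lambda>t. w t \<omega>)"
    using w unfolding std_wiener_process_def by auto
  have wm: "w s \<in> borel_measurable M" if "s \<ge> 0" for s
    using G that unfolding centered_gaussian_process_def by auto
  have meas: "\<forall>t\<in>{0..1}. wiener_bridge N w t \<in> borel_measurable M"
  proof
    fix t :: real assume t: "t \<in> {0..1}"
    have [measurable]: "w N \<in> borel_measurable M" "w (N * (1 - t)) \<in> borel_measurable M"
      using wm N t by auto
    show "wiener_bridge N w t \<in> borel_measurable M" unfolding wiener_bridge_def[abs_def] by measurable
  qed
  have gauss: "normal_rv M (\<lambda>\<omega>. \<Sum>i<m. cs i * wiener_bridge N w (ts i) \<omega>) 0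
          (\<Sum>i<m. \<Sum>l<m. cs i * cs l * (min (ts i) (ts l) - ts i * ts l))"
    if ts: "\<forall>i<m. ts i \<in> {0..1}" for m :: nat and ts cs :: "nat \<Rightarrow> real"
  proof -
    define A where "A = (\<Sum>i<m. cs i * (1 - ts i))"
    define ts' where "ts' = (\<lambda>i. if i < m then N * (1 - ts i) else N)"
    define cs' where "cs' = (\<lambda>i. if i < m then - cs i / sqrt N else A / sqrt N)"
    have "\<forall>i<Suc m. ts' i \<in> {0..}" using ts N unfolding ts'_def by auto
    then have "normal_rv M (\<lambda>\<omega>. \<Sum>i<Suc m. cs' i * w (ts' i) \<omega>) 0
        (\<Sum>i<Suc m. \<Sum>l<Suc m. cs' i * cs' l * min (ts' i) (ts' l))"
      using G unfolding centered_gaussian_process_def by blast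
    moreover have "(\<lambda>\<omega>. \<Sum>i<Suc m. cs' i * w (ts' i) \<omega>) = (\<lambda>\<omega>. \<Sum>i<m. cs i * wiener_bridge N w (ts i) \<omega>)"
    proof
      fix \<omega>
      have "(\<Sum>i<m. cs i * wiener_bridge N w (ts i) \<omega>)
          = (\<Sum>i<m. cs i * (1 - ts i) * (w N \<omega> / sqrt N)) - (\<Sum>i<m. cs i * w (N * (1 - ts i)) \<omega> / sqrt N)"
        unfolding wiener_bridge_def sum_subtractf[symmetric] by (rule sum.cong) (simp_all add: algebra_simps diff_divide_distrib add_divide_distrib)
      also have "(\<Sum>i<m. cs i * (1 - ts i) * (w N \<omega> / sqrt N)) = cs' m * w (ts' m) \<omega>"
        unfolding cs'_def ts'_def A_def by (simp add: sum_distrib_right sum_divide_distrib)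
      also have "(\<Sum>i<m. cs i * w (N * (1 - ts i)) \<omega> / sqrt N) = - (\<Sum>i<m. cs' i * w (ts' i) \<omega>)"
        unfolding cs'_def ts'_def by (simp add: sum_negf[symmetric])
      finally show "(\<Sum>i<Suc m. cs' i * w (ts' i) \<omega>) = (\<Sum>i<m. cs i * wiener_bridge N w (ts i) \<omega>)" by simp
    qed
    moreover have "(\<Sum>i<Suc m. \<Sum>l<Suc m. cs' i * cs' l * min (ts' i) (ts' l))
       = (\<Sum>i<m. \<Sum>l<m. cs i * cs l * (min (ts i) (ts l) - ts i * ts l))"
      unfolding ts'_def cs'_def A_def by (rule wiener_bridge_covariance_identity[OF N ts])
    ultimately show ?thesis by simp
  qed
  have "AE \<omega> in M. continuous_on {0..1} (\<lambda>t. wiener_bridge N w t \<omega>)"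
    using AEc by eventually_elim (rule continuous_on_wiener_bridge[OF N])
  then show ?thesis unfolding std_brownian_bridge_def centered_gaussian_process_def
    using meas gauss by blast
qed

lemma indep_processes_wiener_bridge:
  assumes P: "prob_space M" and N: "N > 0" and indep: "indep_processes M {0..} J W"
  shows "indep_processes M {0..1} J (\<lambda>j. wiener_bridge N (W j))"
proof -
  define Y where "Y g = (\<lambda>t\<in>{0..1}. ((1 - t) * g N - g (N * (1 - t))) / sqrt N)" for g :: "real \<Rightarrow> real"
  have Ym: "Y \<in> measurable (Pi\<^sub>M {0..} (\<lambda>_. borel)) (Pi\<^sub>M {0..1} (\<lambda>_. borel))"
    unfolding Y_def
  proof (rule measurable_restrict)
    fix t :: real assume t: "t \<in> {0..1}"
    have [measurable]: "(\<lambda>g. g N) \<in> borel_measurable (Pi\<^sub>M {0..} (\<lambda>_. borel))"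
      "(\<lambda>g. g (N * (1 - t))) \<in> borel_measurable (Pi\<^sub>M {0..} (\<lambda>_. borel))"
      by (rule measurable_component_singleton, use N t in auto)+
    show "(\<lambda>g::real\<Rightarrow>real. ((1 - t) * g N - g (N * (1 - t))) / sqrt N) \<in> borel_measurable (Pi\<^sub>M {0..} (\<lambda>_. borel))"
      by measurable
  qed
  have "prob_space.indep_vars M (\<lambda>_. Pi\<^sub>M {0..1} (\<lambda>_. borel)) (\<lambda>j \<omega>. Y (restrict (\<lambda>t. W j t \<omega>) {0..})) J"
    by (rule prob_space.indep_vars_compose2[OF P indep[unfolded indep_processes_def]]) (use Ym in auto)
  moreover have "(\<lambda>j \<omega>. Y (restrict (\<lambda>t. W j t \<omega>) {0..})) = (\<lambda>j \<omega>. restrict (\<lambda>t. wiener_bridge N (W j) t \<omega>) {0..1})"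
    using N unfolding Y_def wiener_bridge_def by (auto simp: restrict_def fun_eq_iff)
  ultimately show ?thesis unfolding indep_processes_def by simp
qed

lemma outer_prob_le_measure:
  assumes "S \<subseteq> A" "A \<in> sets M"
  shows "outer_prob M S \<le> measure M A"
  unfolding outer_prob_def by (rule cINF_lower) (use assms in \<open>auto intro!: bdd_belowI[of _ 0]\<close>)

lemma outer_prob_nonneg:
  assumes "S \<subseteq> space M"
  shows "0 \<le> outer_prob M S"
  unfolding outer_prob_def by (rule cINF_greatest) (use assms sets.top in auto)

lemma AE_tendsto_zero_imp_measure_tendsto_zero:
  fixes X :: "nat \<Rightarrow> 'a \<Rightarrow> real"
  assumes P: "prob_space M" and Xm: "\<And>n. X n \<in> borel_measurable M"
    and ae: "AE \<omega> in M. (\<lambda>n. X n \<omega>) \<longlonglongrightarrow> 0" and c: "c > 0"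
  shows "(\<lambda>n. measure M {\<omega>\<in>space M. c \<le> \<bar>X n \<omega>\<bar>}) \<longlonglongrightarrow> 0"
proof -
  interpret prob_space M by (rule P)
  define F where "F N = {\<omega>\<in>space M. \<exists>n\<ge>N. c \<le> \<bar>X n \<omega>\<bar>}" for N
  have Fs: "F N \<in> sets M" for N
  proof -
    have "F N = (\<Union>n\<in>{N..}. {\<omega>\<in>space M. c \<le> \<bar>X n \<omega>\<bar>})" unfolding F_def by auto
    also have "\<dots> \<in> sets M"
    proof -
      have "{\<omega>\<in>space M. c \<le> \<bar>X n \<omega>\<bar>} \<in> sets M" for n
        using borel_measurable_le[OF borel_measurable_const[of c] borel_measurable_abs[OF Xm[of n]]] by simp
      then show ?thesis by (intro sets.countable_UN') auto
    qed
    finally show ?thesis .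
  qed
  have "decseq F" unfolding decseq_def F_def by (auto intro: order.trans)
  then have lim: "(\<lambda>N. measure M (F N)) \<longlonglongrightarrow> measure M (\<Inter>N. F N)"
    by (intro finite_Lim_measure_decseq) (use Fs in auto)
  have null: "AE \<omega> in M. \<omega> \<notin> (\<Inter>N. F N)"
    using ae
  proof eventually_elim
    case (elim \<omega>)
    then obtain N where "\<forall>n\<ge>N. \<bar>X n \<omega> - 0\<bar> < c" using c unfolding LIMSEQ_def dist_real_def by blast
    then have "\<omega> \<notin> F N" unfolding F_def by force
    then show ?case by blast
  qed
  have Is: "(\<Inter>N. F N) \<in> sets M" using Fs by auto
  have "{\<omega>\<in>space M. \<not> \<omega> \<notin> (\<Inter>N. F N)} = (\<Inter>N. F N)" unfolding F_def by auto
  then have "emeasure M (\<Inter>N. F N) = 0" using AE_iff_measurable[OF Is] null by simp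
  then have "measure M (\<Inter>N. F N) = 0" by (simp add: emeasure_eq_measure)
  then have F0: "(\<lambda>N. measure M (F N)) \<longlonglongrightarrow> 0" using lim by simp
  show ?thesis
  proof (rule Lim_null_comparison[OF always_eventually F0], intro allI)
    fix n
    have "measure M {\<omega>\<in>space M. c \<le> \<bar>X n \<omega>\<bar>} \<le> measure M (F n)"
      by (rule finite_measure_mono[OF _ Fs]) (unfold F_def, blast)
    then show "norm (measure M {\<omega>\<in>space M. c \<le> \<bar>X n \<omega>\<bar>}) \<le> measure M (F n)" by simp
  qed
qed

lemma outer_prob_tendsto_zero_by_domination:
  fixes Z :: "nat \<Rightarrow> 'a \<Rightarrow> ereal" and X :: "nat \<Rightarrow> 'a \<Rightarrow> real"
    and G :: "nat \<Rightarrow> nat \<Rightarrow> 'a set" and b c :: "nat \<Rightarrow> real"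
  assumes P: "prob_space M"
    and Xm: "\<And>n. X n \<in> borel_measurable M" and Xlim: "AE \<omega> in M. (\<lambda>n. X n \<omega>) \<longlonglongrightarrow> 0"
    and Gs: "\<And>n K. G n K \<in> sets M" and Gb: "\<And>n K. measure M (G n K) \<le> b K"
    and b: "b \<longlonglongrightarrow> 0" and c: "c \<longlonglongrightarrow> 0"
    and bound: "\<And>K. \<forall>\<^sub>F n in sequentially. \<forall>\<omega>\<in>space M - G n K. Z n \<omega> \<le> ereal (X n \<omega> + c K)"
    and \<epsilon>: "\<epsilon> > 0"
  shows "(\<lambda>n. outer_prob M {\<omega>\<in>space M. Z n \<omega> > ereal \<epsilon>}) \<longlonglongrightarrow> 0"
proof (rule LIMSEQ_I)
  interpret prob_space M by (rule P)
  fix e :: real assume e: "e > 0"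
  have "\<forall>\<^sub>F K in sequentially. b K < e / 2 \<and> c K < \<epsilon> / 2"
    using order_tendstoD(2)[OF b, of "e/2"] order_tendstoD(2)[OF c, of "\<epsilon>/2"] e \<epsilon>
    by (auto intro: eventually_conj)
  then obtain K where bK: "b K < e / 2" and cK: "c K < \<epsilon> / 2"
    by (auto simp: eventually_sequentially)
  define A where "A n = {\<omega>\<in>space M. \<epsilon> / 2 \<le> \<bar>X n \<omega>\<bar>}" for n
  have As: "A n \<in> sets M" for n unfolding A_def using Xm by measurable
  have "\<forall>\<^sub>F n in sequentially. measure M (A n) < e / 2"
    using order_tendstoD(2)[OF AE_tendsto_zero_imp_measure_tendsto_zero[OF P Xm Xlim], of "\<epsilon>/2" "e/2"]
      e \<epsilon> unfolding A_def by simp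
  with bound[of K] have "\<forall>\<^sub>F n in sequentially. outer_prob M {\<omega>\<in>space M. Z n \<omega> > ereal \<epsilon>} < e"
  proof eventually_elim
    case (elim n)
    have "{\<omega>\<in>space M. Z n \<omega> > ereal \<epsilon>} \<subseteq> G n K \<union> A n"
    proof
      fix \<omega> assume \<omega>: "\<omega> \<in> {\<omega>\<in>space M. Z n \<omega> > ereal \<epsilon>}"
      show "\<omega> \<in> G n K \<union> A n"
      proof (rule ccontr)
        assume "\<omega> \<notin> G n K \<union> A n"
        then have "\<omega> \<in> space M - G n K" "\<bar>X n \<omega>\<bar> < \<epsilon> / 2" using \<omega> unfolding A_def by auto
        moreover have "ereal \<epsilon> < Z n \<omega>" using \<omega> by simp
        ultimately have "ereal \<epsilon> < ereal (X n \<omega> + c K)"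
          using elim(1) by (blast intro: less_le_trans)
        then show False using cK \<open>\<bar>X n \<omega>\<bar> < \<epsilon> / 2\<close> by simp
      qed
    qed
    then have "outer_prob M {\<omega>\<in>space M. Z n \<omega> > ereal \<epsilon>} \<le> measure M (G n K \<union> A n)"
      using Gs As by (intro outer_prob_le_measure) auto
    also have "\<dots> \<le> measure M (G n K) + measure M (A n)"
      using Gs As by (intro measure_Un_le) auto
    also have "\<dots> < e" using Gb[of n K] bK elim(2) by linarith
    finally show ?case .
  qed
  then obtain N where "\<And>n. n \<ge> N \<Longrightarrow> outer_prob M {\<omega>\<in>space M. Z n \<omega> > ereal \<epsilon>} < e"
    by (auto simp: eventually_sequentially)
  moreover have "0 \<le> outer_prob M {\<omega>\<in>space M. Z n \<omega> > ereal \<epsilon>}" for n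
    by (rule outer_prob_nonneg) auto
  ultimately show "\<exists>N. \<forall>n\<ge>N. norm (outer_prob M {\<omega>\<in>space M. Z n \<omega> > ereal \<epsilon>} - 0) < e"
    by auto
qed

lemma borel_measurable_vec_nth:
  fixes f :: "'a \<Rightarrow> real ^ 'd"
  assumes "f \<in> borel_measurable M"
  shows "(\<lambda>\<omega>. f \<omega> $ p) \<in> borel_measurable M"
  using measurable_compose[OF assms borel_measurable_continuous_onI[OF linear_continuous_on]] by auto

lemma max_component_tendsto_zero:
  fixes v :: "nat \<Rightarrow> nat \<Rightarrow> real ^ 'd"
  assumes "(\<lambda>n. (1 / sqrt (real n)) * Max {norm (v n k) | k. k \<in> {1..n}}) \<longlonglongrightarrow> 0"
  shows "(\<lambda>n. Max ((\<lambda>k. \<bar>v n k $ p\<bar>) ` {1..n}) / sqrt (real n)) \<longlonglongrightarrow> 0"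
proof (rule Lim_null_comparison[OF eventually_sequentiallyI[of 1] assms])
  fix n :: nat assume n: "1 \<le> n"
  have fin: "finite {norm (v n k) | k. k \<in> {1..n}}" by (simp add: Setcompr_eq_image)
  have "\<bar>v n k $ p\<bar> \<le> Max {norm (v n k) | k. k \<in> {1..n}}" if "k \<in> {1..n}" for k
  proof -
    have "norm (v n k) \<in> {norm (v n k) | k. k \<in> {1..n}}" using that by blast
    then show ?thesis using component_le_norm_cart[of "v n k" p] Max_ge[OF fin] by (blast intro: order.trans)
  qed
  then have "Max ((\<lambda>k. \<bar>v n k $ p\<bar>) ` {1..n}) \<le> Max {norm (v n k) | k. k \<in> {1..n}}"
    using n by (subst Max_le_iff) auto
  moreover have "0 \<le> Max ((\<lambda>k. \<bar>v n k $ p\<bar>) ` {1..n})"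
    using n by (intro order.trans[OF abs_ge_zero Max_ge[of _ "\<bar>v n 1 $ p\<bar>"]]) auto
  ultimately show "norm (Max ((\<lambda>k. \<bar>v n k $ p\<bar>) ` {1..n}) / sqrt (real n))
      \<le> 1 / sqrt (real n) * Max {norm (v n k) | k. k \<in> {1..n}}"
    by (simp add: divide_right_mono)
qed

lemma kernel_statistic_approx_bridge_integrals:
  fixes e :: "nat \<Rightarrow> real ^ 'd" and w Bf :: "'d \<Rightarrow> real \<Rightarrow> real" and lam :: "real ^ 'd" and D :: "'d \<Rightarrow> real"
  assumes n: "n \<ge> 1" and t: "0 < t" "t < 1" and lam: "\<forall>p. lam $ p \<ge> 0"
    and V: "variation_le h (-1) 1 V" "V \<ge> 0" and hz: "\<forall>x\<in>{-1..0}. h x = 0"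
    and Bc: "\<forall>p. continuous_on {0..1} (Bf p)" and mc: "\<forall>p. modulus_le (Bf p) {0..1} (2 / real n) \<epsilon>"
    and hB: "\<forall>p. \<forall>i\<le>n. Bf p (1 - real i / real n) = - (w p (real i) - real i / real n * w p (real n)) / sqrt (real n)"
    and w0: "\<forall>p. w p 0 = 0"
    and D: "\<forall>p. \<forall>k\<in>{1..n}. \<bar>(\<Sum>i=1..k. e i $ p) - sqrt (lam $ p) * w p (real k)\<bar> \<le> D p"
  shows "norm ((1 / sqrt (real n)) *\<^sub>R
             (\<Sum>i=1..n. h (real_of_int (int i - \<lfloor>real n * t\<rfloor>) / real n) *\<^sub>R (e i - (1 / real n) *\<^sub>R (\<Sum>l=1..n. e l)))
           - (\<chi> p. sqrt (lam $ p) * rs_integral (\<lambda>y. Bf p (1 - t - y)) h 0 (1 - t)))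
      \<le> (\<Sum>p\<in>UNIV. 2 * V * D p / sqrt (real n) + 5 * sqrt (lam $ p) * \<epsilon> * V)"
  (is "norm ?v \<le> _")
proof -
  have "norm ?v \<le> (\<Sum>p\<in>UNIV. \<bar>?v $ p\<bar>)" by (rule norm_le_l1_cart)
  also have "\<dots> \<le> (\<Sum>p\<in>UNIV. 2 * V * D p / sqrt (real n) + 5 * sqrt (lam $ p) * \<epsilon> * V)"
  proof (rule sum_mono)
    fix p
    have "0 \<le> lam $ p" "continuous_on {0..1} (Bf p)" "modulus_le (Bf p) {0..1} (2 / real n) \<epsilon>"
      "\<forall>i\<le>n. Bf p (1 - real i / real n) = - (w p (real i) - real i / real n * w p (real n)) / sqrt (real n)"
      "w p 0 = 0" "\<forall>k\<in>{1..n}. \<bar>(\<Sum>i=1..k. e i $ p) - sqrt (lam $ p) * w p (real k)\<bar> \<le> D p"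
      using assms by auto
    from centered_kernel_sum_approx_bridge_integral[OF n t this(1) V hz this(2-6)]
    show "\<bar>?v $ p\<bar> \<le> 2 * V * D p / sqrt (real n) + 5 * sqrt (lam $ p) * \<epsilon> * V"
      by (simp add: mult.assoc)
  qed
  finally show ?thesis .
qed

lemma kernel_statistic_bound_outside_large_jumps:
  fixes \<eta> :: "nat \<Rightarrow> 'a \<Rightarrow> real ^ 'd" and W :: "'d \<Rightarrow> real \<Rightarrow> 'a \<Rightarrow> real" and lam :: "real ^ 'd"
  assumes n: "2 ^ Suc K \<le> n" and t: "0 < t" "t < 1" and lam: "\<forall>p. lam $ p \<ge> 0"
    and V: "variation_le h (-1) 1 V" "V \<ge> 0" and hz: "\<forall>x\<in>{-1..0}. h x = 0"
    and \<omega>: "\<omega> \<in> space M" "\<forall>p. \<omega> \<notin> large_dyadic_jumps M (wiener_bridge (real n) (W p)) K"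
    and Wc: "\<forall>p. continuous_on {0..} (\<lambda>s. W p s \<omega>)" and W0: "\<forall>p. W p 0 \<omega> = 0"
  shows "norm ((1 / sqrt (real n)) *\<^sub>R
             (\<Sum>i=1..n. h (real_of_int (int i - \<lfloor>real n * t\<rfloor>) / real n) *\<^sub>R
                 (\<eta> i \<omega> - (1 / real n) *\<^sub>R (\<Sum>l=1..n. \<eta> l \<omega>)))
           - (\<chi> p. sqrt (lam $ p) * rs_integral (\<lambda>y. wiener_bridge (real n) (W p) (1 - t - y) \<omega>) h 0 (1 - t)))
      \<le> (\<Sum>p\<in>UNIV. 2 * V * Max ((\<lambda>k. \<bar>(\<Sum>i=1..k. \<eta> i \<omega> $ p) - sqrt (lam $ p) * W p (real k) \<omega>\<bar>) ` {1..n})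
            / sqrt (real n) + 5 * sqrt (lam $ p) * (19 * (9/10)^K) * V)"
proof -
  have "(1::nat) \<le> 2 ^ Suc K" by simp
  then have n1: "1 \<le> n" using n by linarith
  then have np: "real n > 0" by simp
  have Bc: "\<forall>p. continuous_on {0..1} (\<lambda>s. wiener_bridge (real n) (W p) s \<omega>)"
    using continuous_on_wiener_bridge[OF np, of "W _" \<omega>] Wc by blast
  have "real (2 ^ Suc K) \<le> real n" using n by (simp only: of_nat_le_iff)
  then have mesh: "2 / real n \<le> 1 / 2 ^ K" using np by (simp add: field_simps)
  have mc: "\<forall>p. modulus_le (\<lambda>s. wiener_bridge (real n) (W p) s \<omega>) {0..1} (2 / real n) (19 * (9/10)^K)"
  proof
    fix p
    have "modulus_le (\<lambda>s. wiener_bridge (real n) (W p) s \<omega>) {0..1} (1 / 2 ^ K) (19 * (9/10)^K)"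
      using Bc by (intro modulus_le_outside_large_dyadic_jumps[OF \<omega>(1) \<omega>(2)[rule_format]]) simp
    then show "modulus_le (\<lambda>s. wiener_bridge (real n) (W p) s \<omega>) {0..1} (2 / real n) (19 * (9/10)^K)"
      using mesh by (rule modulus_le_mono)
  qed
  have hB: "\<forall>p. \<forall>i\<le>n. wiener_bridge (real n) (W p) (1 - real i / real n) \<omega>
      = - (W p (real i) \<omega> - real i / real n * W p (real n) \<omega>) / sqrt (real n)"
    using wiener_bridge_grid[of n] n1 by auto
  have D: "\<forall>p. \<forall>k\<in>{1..n}. \<bar>(\<Sum>i=1..k. \<eta> i \<omega> $ p) - sqrt (lam $ p) * W p (real k) \<omega>\<bar>
      \<le> Max ((\<lambda>k. \<bar>(\<Sum>i=1..k. \<eta> i \<omega> $ p) - sqrt (lam $ p) * W p (real k) \<omega>\<bar>) ` {1..n})"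
    by (intro allI ballI Max_ge) auto
  show ?thesis
    by (rule kernel_statistic_approx_bridge_integrals[OF n1 t lam V hz Bc mc hB W0 D])
qed

lemma AE_std_wiener_processes_regular:
  fixes W :: "nat \<Rightarrow> 'd::finite \<Rightarrow> real \<Rightarrow> 'a \<Rightarrow> real"
  assumes "\<forall>n p. std_wiener_process M (W n p)"
  shows "AE \<omega> in M. \<forall>n p. continuous_on {0..} (\<lambda>s. W n p s \<omega>) \<and> W n p 0 \<omega> = 0"
proof -
  have "AE \<omega> in M. \<forall>p\<in>UNIV. continuous_on {0..} (\<lambda>s. W n p s \<omega>) \<and> W n p 0 \<omega> = 0" for n
    using assms std_wiener_process_zero unfolding std_wiener_process_def
    by (intro AE_finite_allI eventually_conj) auto
  then show ?thesis by (simp add: AE_all_countable)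
qed

lemma max_partial_sum_errors_tendsto_zero:
  fixes \<eta> :: "nat \<Rightarrow> 'a \<Rightarrow> real ^ 'd" and W :: "nat \<Rightarrow> 'd \<Rightarrow> real \<Rightarrow> 'a \<Rightarrow> real"
  assumes \<eta>: "\<forall>i\<ge>1. \<eta> i \<in> borel_measurable M" and W: "\<forall>n p. std_wiener_process M (W n p)"
    and approx: "AE \<omega> in M. (\<lambda>n. (1 / sqrt (real n)) *
        Max {norm ((\<Sum>i=1..k. \<eta> i \<omega>) - (\<chi> j. sqrt (lam $ j) * W n j (real k) \<omega>)) | k. k \<in> {1..n}})
        \<longlonglongrightarrow> 0"
  shows "(\<lambda>\<omega>. \<Sum>p\<in>UNIV. C * Max ((\<lambda>k. \<bar>(\<Sum>i=1..k. \<eta> i \<omega> $ p) - sqrt (lam $ p) * W n p (real k) \<omega>\<bar>) ` {1..n})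
            / sqrt (real n)) \<in> borel_measurable M"
    "AE \<omega> in M. (\<lambda>n. \<Sum>p\<in>UNIV. C * Max ((\<lambda>k. \<bar>(\<Sum>i=1..k. \<eta> i \<omega> $ p) - sqrt (lam $ p) * W n p (real k) \<omega>\<bar>) ` {1..n})
            / sqrt (real n)) \<longlonglongrightarrow> 0"
proof -
  have "(\<lambda>\<omega>. Max ((\<lambda>k. \<bar>(\<Sum>i=1..k. \<eta> i \<omega> $ p) - sqrt (lam $ p) * W n p (real k) \<omega>\<bar>) ` {1..n}))
      \<in> borel_measurable M" for p
  proof (rule borel_measurable_Max)
    fix k
    have "(\<lambda>\<omega>. \<Sum>i=1..k. \<eta> i \<omega> $ p) \<in> borel_measurable M"
      using \<eta> by (intro borel_measurable_sum borel_measurable_vec_nth) auto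
    moreover have "W n p (real k) \<in> borel_measurable M"
      using W unfolding std_wiener_process_def centered_gaussian_process_def by auto
    ultimately show "(\<lambda>\<omega>. \<bar>(\<Sum>i=1..k. \<eta> i \<omega> $ p) - sqrt (lam $ p) * W n p (real k) \<omega>\<bar>) \<in> borel_measurable M"
      by measurable
  qed simp
  then show "(\<lambda>\<omega>. \<Sum>p\<in>UNIV. C * Max ((\<lambda>k. \<bar>(\<Sum>i=1..k. \<eta> i \<omega> $ p) - sqrt (lam $ p) * W n p (real k) \<omega>\<bar>) ` {1..n})
            / sqrt (real n)) \<in> borel_measurable M"
    by measurable
  show "AE \<omega> in M. (\<lambda>n. \<Sum>p\<in>UNIV. C * Max ((\<lambda>k. \<bar>(\<Sum>i=1..k. \<eta> i \<omega> $ p) - sqrt (lam $ p) * W n p (real k) \<omega>\<bar>) ` {1..n})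
            / sqrt (real n)) \<longlonglongrightarrow> 0"
    using approx
  proof eventually_elim
    case (elim \<omega>)
    have "(\<lambda>n. C * (Max ((\<lambda>k. \<bar>(\<Sum>i=1..k. \<eta> i \<omega> $ p) - sqrt (lam $ p) * W n p (real k) \<omega>\<bar>) ` {1..n})
        / sqrt (real n))) \<longlonglongrightarrow> 0" for p
      using max_component_tendsto_zero[OF elim, of p] by (intro tendsto_mult_right_zero) simp
    then show ?case by (intro tendsto_null_sum) simp
  qed
qed

lemma eventually_kernel_statistic_sup_le:
  fixes \<eta> :: "nat \<Rightarrow> 'a \<Rightarrow> real ^ 'd" and W B :: "nat \<Rightarrow> 'd \<Rightarrow> real \<Rightarrow> 'a \<Rightarrow> real" and lam :: "real ^ 'd"
  assumes lam: "\<forall>p. lam $ p \<ge> 0"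
    and V: "variation_le h (-1) 1 V" "V \<ge> 0" and hz: "\<forall>x\<in>{-1..0}. h x = 0"
    and regular: "\<And>\<omega>. \<omega> \<in> space M - N0 \<Longrightarrow> \<forall>n p. continuous_on {0..} (\<lambda>s. W n p s \<omega>) \<and> W n p 0 \<omega> = 0"
    and B: "\<And>n p. n \<ge> 1 \<Longrightarrow> B n p = wiener_bridge (real n) (W n p)"
  shows "\<forall>\<^sub>F n in sequentially. \<forall>\<omega>\<in>space M - (N0 \<union> (\<Union>p. large_dyadic_jumps M (B n p) K)).
      (SUP t\<in>{0<..<1}. ereal (norm ((1 / sqrt (real n)) *\<^sub>R
          (\<Sum>i=1..n. h (real_of_int (int i - \<lfloor>real n * t\<rfloor>) / real n) *\<^sub>R
              (\<eta> i \<omega> - (1 / real n) *\<^sub>R (\<Sum>l=1..n. \<eta> l \<omega>)))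
        - (\<chi> p. sqrt (lam $ p) * rs_integral (\<lambda>y. B n p (1 - t - y) \<omega>) h 0 (1 - t)))))
      \<le> ereal ((\<Sum>p\<in>UNIV. 2 * V * Max ((\<lambda>k. \<bar>(\<Sum>i=1..k. \<eta> i \<omega> $ p) - sqrt (lam $ p) * W n p (real k) \<omega>\<bar>) ` {1..n})
            / sqrt (real n)) + 95 * V * (\<Sum>p\<in>UNIV. sqrt (lam $ p)) * (9/10) ^ K)"
proof (rule eventually_sequentiallyI[of "2 ^ Suc K"], intro ballI SUP_least)
  fix n :: nat and \<omega> and t :: real
  assume n: "2 ^ Suc K \<le> n" and \<omega>: "\<omega> \<in> space M - (N0 \<union> (\<Union>p. large_dyadic_jumps M (B n p) K))"
    and t: "t \<in> {0<..<1}"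
  have "(1::nat) \<le> 2 ^ Suc K" by simp
  then have "1 \<le> n" using n by linarith
  then have "B n p = wiener_bridge (real n) (W n p)" for p using B by simp
  moreover have "(\<Sum>p\<in>UNIV. 5 * sqrt (lam $ p) * (19 * (9/10) ^ K) * V)
      = 95 * V * (\<Sum>p\<in>UNIV. sqrt (lam $ p)) * (9/10) ^ K"
    by (simp add: sum_distrib_left sum_distrib_right mult_ac)
  ultimately show "ereal (norm ((1 / sqrt (real n)) *\<^sub>R
          (\<Sum>i=1..n. h (real_of_int (int i - \<lfloor>real n * t\<rfloor>) / real n) *\<^sub>R
              (\<eta> i \<omega> - (1 / real n) *\<^sub>R (\<Sum>l=1..n. \<eta> l \<omega>)))
        - (\<chi> p. sqrt (lam $ p) * rs_integral (\<lambda>y. B n p (1 - t - y) \<omega>) h 0 (1 - t))))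
      \<le> ereal ((\<Sum>p\<in>UNIV. 2 * V * Max ((\<lambda>k. \<bar>(\<Sum>i=1..k. \<eta> i \<omega> $ p) - sqrt (lam $ p) * W n p (real k) \<omega>\<bar>) ` {1..n})
            / sqrt (real n)) + 95 * V * (\<Sum>p\<in>UNIV. sqrt (lam $ p)) * (9/10) ^ K)"
    using kernel_statistic_bound_outside_large_jumps[OF n _ _ lam V hz, of t \<omega> M "W n" \<eta>]
      t \<omega> regular[of \<omega>] by (simp add: sum.distrib)
qed

theorem lemmaB1:
  fixes M :: "'a measure"
    and lam :: "real ^ 'd"
    and \<eta> :: "nat \<Rightarrow> 'a \<Rightarrow> real ^ 'd"
    and h :: "real \<Rightarrow> real"
    and W :: "nat \<Rightarrow> 'd \<Rightarrow> real \<Rightarrow> 'a \<Rightarrow> real"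
  assumes M: "prob_space M"
    and lam_nonneg: "\<forall>j. lam $ j \<ge> 0"
    and eta_rv: "\<forall>i\<ge>1. \<eta> i \<in> borel_measurable M"
    and W_wiener: "\<forall>n j. std_wiener_process M (W n j)"
    and W_indep: "\<forall>n. indep_processes M {0..} UNIV (W n)"
    and approx: "AE \<omega> in M. (\<lambda>n. (1 / sqrt (real n)) *
        Max {norm ((\<Sum>i=1..k. \<eta> i \<omega>) - (\<chi> j. sqrt (lam $ j) * W n j (real k) \<omega>)) | k. k \<in> {1..n}})
        \<longlonglongrightarrow> 0"
    and h_nonconst: "\<exists>x\<in>{-1..1}. \<exists>y\<in>{-1..1}. h x \<noteq> h y"
    and h_zero: "\<forall>x\<in>{-1..0}. h x = 0"
    and h_bv: "bounded_variation_on h (-1) 1"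
    and h_holder: "\<exists>\<alpha>>0. holder_on \<alpha> {0..1} h"
  shows "\<exists>B :: nat \<Rightarrow> 'd \<Rightarrow> real \<Rightarrow> 'a \<Rightarrow> real.
     (\<forall>n j. std_brownian_bridge M (B n j)) \<and>
     (\<forall>n. indep_processes M {0..1} UNIV (B n)) \<and>
     (\<forall>\<epsilon>>0. (\<lambda>n. outer_prob M {\<omega>\<in>space M.
        (SUP t\<in>{0<..<1}. ereal (norm (
           (1 / sqrt (real n)) *\<^sub>R
             (\<Sum>i=1..n. h ((real_of_int (int i - \<lfloor>real n * t\<rfloor>)) / real n) *\<^sub>R
                 (\<eta> i \<omega> - (1 / real n) *\<^sub>R (\<Sum>l=1..n. \<eta> l \<omega>)))
           - (\<chi> p. sqrt (lam $ p) *
                rs_integral (\<lambda>y. B n p (1 - t - y) \<omega>) h 0 (1 - t)))))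
        > ereal \<epsilon>}) \<longlonglongrightarrow> 0)"
proof -
  interpret prob_space M by (rule M)
  obtain V where V: "variation_le h (-1) 1 V" "V \<ge> 0"
    using bounded_variation_on_imp_variation_le[OF h_bv] by force
  obtain N0 where N0: "N0 \<in> null_sets M"
    and regular: "\<And>\<omega>. \<omega> \<in> space M - N0 \<Longrightarrow> \<forall>n p. continuous_on {0..} (\<lambda>s. W n p s \<omega>) \<and> W n p 0 \<omega> = 0"
    using AE_std_wiener_processes_regular[OF W_wiener] by (elim AE_E3) auto
  \<comment> \<open>the scale max 1 n only keeps the bridge well defined at n = 0, which does not affect the limit\<close>
  define B where "B n p = wiener_bridge (real (max 1 n)) (W n p)" for n p
  have bridges: "\<forall>p. std_brownian_bridge M (B n p)" for n
    unfolding B_def using W_wiener by (intro allI std_brownian_bridge_wiener_bridge) auto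
  have indep: "indep_processes M {0..1} UNIV (B n)" for n
    unfolding B_def using W_indep by (intro indep_processes_wiener_bridge[OF M]) auto
  note errors = max_partial_sum_errors_tendsto_zero[OF eta_rv W_wiener approx, where C = "2 * V"]
  note exceptional = measure_null_union_large_dyadic_jumps_le[OF M N0 bridges]
  have rates: "(\<lambda>K. real CARD('d) * 13 * (5000 / 6561) ^ K) \<longlonglongrightarrow> 0"
    "(\<lambda>K. 95 * V * (\<Sum>p\<in>UNIV. sqrt (lam $ p)) * (9/10) ^ K) \<longlonglongrightarrow> 0"
    by (intro tendsto_mult_right_zero LIMSEQ_power_zero; simp)+
  have B_eq: "B n p = wiener_bridge (real n) (W n p)" if "n \<ge> 1" for n p
    using that by (simp add: B_def max_absorb2)
  note bound = eventually_kernel_statistic_sup_le[OF lam_nonneg V h_zero regular B_eq]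
  show ?thesis
    using outer_prob_tendsto_zero_by_domination[OF M errors exceptional rates bound] bridges indep by blast
qed

end
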